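(* Let $G(s)\in\mathbb{C}(s)^{n\times n}$ be a strictly proper complex rational transfer function of McMillan degree $\delta$ with $G(s)=G(s)^t$. Then: (1) $G(s)$ has a controllable and observable complex symmetric realization, i.e. there exist $A\in\mathbb{C}^{\delta\times\delta}$ with $A=A^t$, $B\in\mathbb{C}^{\delta\times n}$ and $C=B^t$ such that $G(s)=C(sI_\delta-A)^{-1}B$ and $(A,B,C)$ is controllable and observable; equivalently $(A,B,C)=(A^t,C^t,B^t)$. (2) If $(A_i,B_i,C_i)$, $i=1,2$, are two controllable and observable complex symmetric realizations of $G(s)$ (so $A_i=A_i^t$, $C_i=B_i^t$), then there exists a unique $S\in O(\delta,\mathbb{C})$ such that $(A_2,B_2,C_2)=(SA_1S^{-1},SB_1,C_1S^{-1})$.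
   Context: $O(\delta,\mathbb{C})=\{S\in\mathbb{C}^{\delta\times\delta}: SS^t=I_\delta\}$ is the complex orthogonal group. A realization of $G$ is a triple $(A,B,C)$ with $G(s)=C(sI-A)^{-1}B$; the McMillan degree is the state dimension of a controllable and observable (minimal) realization. *)

theory Defs
  imports "Jordan_Normal_Form.DL_Rank" "Jordan_Normal_Form.Gauss_Jordan_Elimination"
          "HOL-Computational_Algebra.Polynomial"
begin

definition minv :: "complex mat \<Rightarrow> complex mat" where
  "minv M = the (mat_inverse M)"

(* Functions agreeing cofinitely represent the same element of C(s)^(n x n). *)
definition strictly_proper_rational :: "nat \<Rightarrow> (complex \<Rightarrow> complex mat) \<Rightarrow> bool" where
  "strictly_proper_rational n G \<longleftrightarrow>
     (\<forall>s. G s \<in> carrier_mat n n) \<and>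
     (\<exists>P Q :: nat \<Rightarrow> nat \<Rightarrow> complex poly. \<forall>i<n. \<forall>j<n.
        Q i j \<noteq> 0 \<and> (P i j = 0 \<or> degree (P i j) < degree (Q i j)) \<and>
        (\<forall>\<^sub>F s in cofinite. G s $$ (i,j) = poly (P i j) s / poly (Q i j) s))"

definition is_realization ::
  "nat \<Rightarrow> (complex \<Rightarrow> complex mat) \<Rightarrow> nat \<Rightarrow> complex mat \<Rightarrow> complex mat \<Rightarrow> complex mat \<Rightarrow> bool" where
  "is_realization n G d A B C \<longleftrightarrow>
     A \<in> carrier_mat d d \<and> B \<in> carrier_mat d n \<and> C \<in> carrier_mat n d \<and>
     (\<forall>\<^sub>F s in cofinite. G s = C * minv (s \<cdot>\<^sub>m 1\<^sub>m d - A) * B)"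

(* Kalman controllability matrix [B, AB, ..., A^(d-1) B]  (d x d*m) *)
definition ctrb_mat :: "complex mat \<Rightarrow> complex mat \<Rightarrow> complex mat" where
  "ctrb_mat A B = (let d = dim_row A; m = dim_col B in
     mat d (d * m) (\<lambda>(i,j). ((A ^\<^sub>m (j div m)) * B) $$ (i, j mod m)))"

(* Kalman observability matrix [C; CA; ...; C A^(d-1)]  (d*p x d) *)
definition obsv_mat :: "complex mat \<Rightarrow> complex mat \<Rightarrow> complex mat" where
  "obsv_mat A C = (let d = dim_row A; p = dim_row C in
     mat (d * p) d (\<lambda>(i,j). (C * (A ^\<^sub>m (i div p))) $$ (i mod p, j)))"

definition controllable :: "complex mat \<Rightarrow> complex mat \<Rightarrow> bool" where
  "controllable A B \<longleftrightarrow> vec_space.rank (dim_row A) (ctrb_mat A B) = dim_row A"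

definition observable :: "complex mat \<Rightarrow> complex mat \<Rightarrow> bool" where
  "observable A C \<longleftrightarrow> vec_space.rank (dim_row A) (transpose_mat (obsv_mat A C)) = dim_row A"

definition mcmillan_degree :: "nat \<Rightarrow> (complex \<Rightarrow> complex mat) \<Rightarrow> nat \<Rightarrow> bool" where
  "mcmillan_degree n G \<delta> \<longleftrightarrow>
     (\<exists>A B C. is_realization n G \<delta> A B C \<and> controllable A B \<and> observable A C)"

definition orth_group :: "nat \<Rightarrow> complex mat set" where
  "orth_group d = {S \<in> carrier_mat d d. S * transpose_mat S = 1\<^sub>m d}"

end

theory Submission
  imports Defs "Jordan_Normal_Form.Char_Poly"
begin

(* Two realizations of the same transfer function have the same Markov parameters C A^k B, so by
   the Kalman factorization of the Hankel matrices two minimal realizations are similar, via a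
   similarity that is unique because the first one is controllable. If G is symmetric, then
   (A^t, C^t, B^t) is another minimal realization of G, so there is a T with T A = A^t T and
   T B = C^t; the same holds for T^t, hence T is symmetric by uniqueness. Over the complex numbers
   a nonsingular symmetric T factors as T = R^t R (Gram-Schmidt for the bilinear form x^t T y, which
   needs square roots), and the change of basis by R gives a symmetric realization. For two symmetric
   minimal realizations the transpose of the inverse similarity is again a similarity, so by
   uniqueness the similarity is orthogonal. *)

lemma (in vec_space) span_cols_eq_image:
  assumes M: "M \<in> carrier_mat n m"
  shows "span (set (cols M)) = (\<lambda>x. M *\<^sub>v x) ` carrier_vec m"
proof -
  have cols: "set (cols M) \<subseteq> carrier_vec n" using M cols_dim by blast
  have lincomb: "lincomb_list c (cols M) = M *\<^sub>v vec m c" for c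
  proof -
    have "\<forall>w \<in> set (cols M). dim_vec w = n" using cols by auto
    then show ?thesis using lincomb_list_as_mat_mult[of "cols M" c] M mat_of_cols_cols[of M] by simp
  qed
  have "span (set (cols M)) = range (\<lambda>c. lincomb_list c (cols M))"
    using span_list_as_span[OF cols] unfolding span_list_def by auto
  also have "\<dots> = (\<lambda>x. M *\<^sub>v x) ` carrier_vec m"
  proof (intro equalityI subsetI)
    fix v assume "v \<in> (\<lambda>x. M *\<^sub>v x) ` carrier_vec m"
    then obtain x where x: "x \<in> carrier_vec m" and v: "v = M *\<^sub>v x" by blast
    have "vec m (\<lambda>i. x $ i) = x" using x by auto
    then have "v = lincomb_list (\<lambda>i. x $ i) (cols M)" unfolding lincomb v by simp
    then show "v \<in> range (\<lambda>c. lincomb_list c (cols M))" by blast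
  qed (auto simp: lincomb)
  finally show ?thesis .
qed

lemma (in vec_space) rank_eq_iff_span_cols:
  assumes M: "M \<in> carrier_mat n m"
  shows "rank M = n \<longleftrightarrow> span (set (cols M)) = carrier_vec n"
proof -
  have cols: "set (cols M) \<subseteq> carrier_vec n" using M cols_dim by blast
  obtain S where S: "maximal S (\<lambda>T. T \<subseteq> set (cols M) \<and> lin_indpt T)"
    using maximal_exists[of "\<lambda>T. T \<subseteq> set (cols M) \<and> lin_indpt T" "card (set (cols M))" "{}"]
    by (meson List.finite_set card_mono empty_iff empty_subsetI finite_lin_indpt2 rev_finite_subset)
  have sub: "S \<subseteq> set (cols M)" and indpt: "lin_indpt S" using S unfolding maximal_def by auto
  have carr: "S \<subseteq> carrier_vec n" and fin: "finite S" using sub cols finite_subset by auto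
  have "set (cols M) \<subseteq> span S"
  proof
    fix v assume v: "v \<in> set (cols M)"
    show "v \<in> span S"
    proof (cases "v \<in> S")
      case False
      with S v sub have "\<not> lin_indpt (insert v S)" unfolding maximal_def by blast
      with False v cols show ?thesis using lin_dep_iff_in_span[OF carr indpt] by auto
    qed (use carr in_own_span in blast)
  qed
  then have span_S: "span S = span (set (cols M))"
    using span_subsetI[OF carr] span_is_monotone[OF sub] by blast
  have "rank M = n \<longleftrightarrow> basis S"
  proof
    assume "rank M = n"
    then show "basis S"
      using rank_card_indpt[OF M S] dim_li_is_basis[OF fin_dim fin carr indpt] dim_is_n by simp
  next
    assume "basis S"
    then show "rank M = n" using rank_card_indpt[OF M S] dim_basis[OF fin] dim_is_n by simp
  qed
  also have "\<dots> \<longleftrightarrow> span (set (cols M)) = carrier_vec n"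
    using indpt carr unfolding basis_def span_S by auto
  finally show ?thesis .
qed

lemma (in vec_space) rank_eq_iff_right_invertible:
  assumes M: "M \<in> carrier_mat n m"
  shows "rank M = n \<longleftrightarrow> (\<exists>R \<in> carrier_mat m n. M * R = 1\<^sub>m n)"
proof -
  have "rank M = n \<longleftrightarrow> carrier_vec n \<subseteq> (\<lambda>x. M *\<^sub>v x) ` carrier_vec m"
    unfolding rank_eq_iff_span_cols[OF M] span_cols_eq_image[OF M, symmetric]
    using span_closed[of "set (cols M)"] cols_dim[of M] M by auto
  also have "\<dots> \<longleftrightarrow> (\<exists>R \<in> carrier_mat m n. M * R = 1\<^sub>m n)"
  proof
    assume "carrier_vec n \<subseteq> (\<lambda>x. M *\<^sub>v x) ` carrier_vec m"
    then have "\<forall>j<n. \<exists>x \<in> carrier_vec m. unit_vec n j = M *\<^sub>v x"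
      using unit_vec_carrier by blast
    then obtain f where f: "\<And>j. j < n \<Longrightarrow> f j \<in> carrier_vec m \<and> unit_vec n j = M *\<^sub>v f j"
      by metis
    define R where "R = mat m n (\<lambda>(i, j). f j $ i)"
    have R: "R \<in> carrier_mat m n" unfolding R_def by simp
    have col: "col R j = f j" if "j < n" for j
      using f[OF that] that unfolding R_def by auto
    have "M * R = 1\<^sub>m n"
    proof (rule eq_matI)
      fix i j assume "i < dim_row (1\<^sub>m n)" "j < dim_col (1\<^sub>m n)"
      then have "i < n" "j < n" by auto
      then have "(M * R) $$ (i, j) = (M *\<^sub>v f j) $ i" using M R col by simp
      also have "\<dots> = 1\<^sub>m n $$ (i, j)" using f \<open>i < n\<close> \<open>j < n\<close> by (metis index_one_mat(1) index_unit_vec(1))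
      finally show "(M * R) $$ (i, j) = 1\<^sub>m n $$ (i, j)" .
    qed (use M R in auto)
    with R show "\<exists>R \<in> carrier_mat m n. M * R = 1\<^sub>m n" by blast
  next
    assume "\<exists>R \<in> carrier_mat m n. M * R = 1\<^sub>m n"
    then obtain R where R: "R \<in> carrier_mat m n" and MR: "M * R = 1\<^sub>m n" by blast
    have "v = M *\<^sub>v (R *\<^sub>v v)" if "v \<in> carrier_vec n" for v
      using that M R MR by (simp add: assoc_mult_mat_vec[symmetric])
    then show "carrier_vec n \<subseteq> (\<lambda>x. M *\<^sub>v x) ` carrier_vec m" using R by fastforce
  qed
  finally show ?thesis .
qed

lemma pow_mat_add:
  fixes A :: "'a::semiring_1 mat"
  assumes A: "A \<in> carrier_mat n n"
  shows "A ^\<^sub>m (a + b) = A ^\<^sub>m a * A ^\<^sub>m b"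
proof (induction b)
  case (Suc b)
  have "A ^\<^sub>m (a + Suc b) = A ^\<^sub>m a * A ^\<^sub>m b * A" using Suc by simp
  also have "\<dots> = A ^\<^sub>m a * A ^\<^sub>m Suc b"
    using assoc_mult_mat[OF pow_carrier_mat[OF A] pow_carrier_mat[OF A] A] by simp
  finally show ?case .
qed (use A in simp)

lemma pow_mat_intertwine:
  fixes S A1 A2 :: "'a::semiring_1 mat"
  assumes S: "S \<in> carrier_mat d d" and A1: "A1 \<in> carrier_mat d d" and A2: "A2 \<in> carrier_mat d d"
    and SA: "S * A1 = A2 * S"
  shows "S * A1 ^\<^sub>m k = A2 ^\<^sub>m k * S"
proof (induction k)
  case (Suc k)
  have P1: "A1 ^\<^sub>m k \<in> carrier_mat d d" and P2: "A2 ^\<^sub>m k \<in> carrier_mat d d" using A1 A2 by auto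
  have "S * A1 ^\<^sub>m Suc k = (S * A1 ^\<^sub>m k) * A1" using assoc_mult_mat[OF S P1 A1] by simp
  also have "\<dots> = A2 ^\<^sub>m k * (S * A1)" using Suc assoc_mult_mat[OF P2 S A1] by simp
  also have "\<dots> = A2 ^\<^sub>m Suc k * S" using SA assoc_mult_mat[OF P2 A2 S] by simp
  finally show ?case .
qed (use S A1 A2 in simp)

lemma transpose_pow_mat:
  fixes A :: "'a::comm_semiring_1 mat"
  assumes A: "A \<in> carrier_mat n n"
  shows "transpose_mat (A ^\<^sub>m k) = transpose_mat A ^\<^sub>m k"
proof (induction k)
  case (Suc k)
  have "transpose_mat (A ^\<^sub>m Suc k) = transpose_mat (A * A ^\<^sub>m k)"
    using pow_mat_intertwine[OF A A A refl, of k] by simp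
  also have "\<dots> = transpose_mat A ^\<^sub>m Suc k"
    using transpose_mult[OF A pow_carrier_mat[OF A]] Suc by simp
  finally show ?case .
qed (use A in simp)

lemma index_mult_mult_mat:
  fixes C X B :: "'a::comm_semiring_0 mat"
  assumes C: "C \<in> carrier_mat n d" and X: "X \<in> carrier_mat d d" and B: "B \<in> carrier_mat d m"
    and a: "a < n" and b: "b < m"
  shows "(C * X * B) $$ (a, b) = row C a \<bullet> (X *\<^sub>v col B b)"
  using assoc_mult_mat[OF C X B] col_mult2[OF X B b] C X B a b by simp

lemma index_transpose_mult_mult:
  fixes T P :: "'a::comm_semiring_0 mat"
  assumes T: "T \<in> carrier_mat d d" and P: "P \<in> carrier_mat d k" and i: "i < k" and j: "j < k"
  shows "(transpose_mat P * T * P) $$ (i, j) = col P i \<bullet> (T *\<^sub>v col P j)"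
proof -
  have "transpose_mat P \<in> carrier_mat k d" using P by simp
  then show ?thesis using assoc_mult_mat[OF _ T P] col_mult2[OF T P j] T P i j by simp
qed

lemma col_mat_of_cols_snoc:
  assumes P: "P \<in> carrier_mat d k" and p: "p \<in> carrier_vec d" and b: "b < Suc k"
  shows "col (mat_of_cols d (cols P @ [p])) b = (if b < k then col P b else p)"
proof -
  have "(cols P @ [p]) ! b = (if b < k then col P b else p)"
    using b P by (simp add: nth_append)
  moreover have "(cols P @ [p]) ! b \<in> carrier_vec d" using b P p by (simp add: nth_append)
  moreover have "b < length (cols P @ [p])" using b P by simp
  ultimately show ?thesis using col_mat_of_cols by metis
qed

lemma wide_mat_kernel_nonzero:
  fixes A :: "'a::idom mat"
  assumes A: "A \<in> carrier_mat n m" and nm: "n < m"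
  obtains v where "v \<in> carrier_vec m" "v \<noteq> 0\<^sub>v m" "A *\<^sub>v v = 0\<^sub>v n"
proof -
  define B where "B = mat\<^sub>r m m (\<lambda>i. if i = m - 1 then 0\<^sub>v m else if i < n then row A i else 0\<^sub>v m)"
  have B: "B \<in> carrier_mat m m" unfolding B_def by simp
  have "det B = 0" unfolding B_def by (rule det_row_0) (use nm A in auto)
  then obtain v where v: "v \<in> carrier_vec m" "v \<noteq> 0\<^sub>v m" "B *\<^sub>v v = 0\<^sub>v m"
    using det_0_iff_vec_prod_zero[OF B] by auto
  have "(A *\<^sub>v v) $ i = (B *\<^sub>v v) $ i" if "i < n" for i
    using that nm A unfolding B_def by simp
  then have "A *\<^sub>v v = 0\<^sub>v n" using v(3) nm A by auto
  with v that show thesis by blast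
qed

lemma minv:
  fixes M :: "complex mat"
  assumes M: "M \<in> carrier_mat k k" and det: "det M \<noteq> 0"
  shows "minv M \<in> carrier_mat k k" "M * minv M = 1\<^sub>m k" "minv M * M = 1\<^sub>m k"
proof -
  have "M \<in> Units (ring_mat TYPE(complex) k undefined)" by (rule det_non_zero_imp_unit[OF M det])
  then obtain N where "mat_inverse M = Some N"
    using mat_inverse(1)[OF M, of undefined] by (cases "mat_inverse M") auto
  from mat_inverse(2)[OF M this] this
  show "minv M \<in> carrier_mat k k" "M * minv M = 1\<^sub>m k" "minv M * M = 1\<^sub>m k"
    unfolding minv_def by auto
qed

lemma minv_eqI:
  fixes M N :: "complex mat"
  assumes M: "M \<in> carrier_mat k k" and N: "N \<in> carrier_mat k k" and MN: "M * N = 1\<^sub>m k"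
  shows "minv M = N"
proof -
  have "det M \<noteq> 0" using det_mult[OF M N] MN by auto
  note inv = minv[OF M this]
  have "minv M = minv M * (M * N)" using MN inv(1) by simp
  also have "\<dots> = N" using inv(1,3) M N by (simp add: assoc_mult_mat[symmetric, OF inv(1) M N])
  finally show ?thesis .
qed

lemma minv_transpose:
  fixes M :: "complex mat"
  assumes M: "M \<in> carrier_mat d d" and det: "det M \<noteq> 0"
  shows "minv (transpose_mat M) = transpose_mat (minv M)"
proof -
  note inv = minv[OF M det]
  have "transpose_mat M * transpose_mat (minv M) = 1\<^sub>m d"
    using transpose_mult[OF inv(1) M] inv(3) by simp
  then show ?thesis using minv_eqI[of "transpose_mat M" d "transpose_mat (minv M)"] M inv(1) by simp
qed

lemma conjugate_eq_iff_intertwines: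
  fixes T U A1 A2 :: "'a::semiring_1 mat"
  assumes T: "T \<in> carrier_mat d d" and U: "U \<in> carrier_mat d d"
    and A1: "A1 \<in> carrier_mat d d" and A2: "A2 \<in> carrier_mat d d"
    and TU: "T * U = 1\<^sub>m d" and UT: "U * T = 1\<^sub>m d"
  shows "A2 = T * A1 * U \<longleftrightarrow> T * A1 = A2 * T"
proof
  assume "A2 = T * A1 * U"
  then show "T * A1 = A2 * T" using T U A1 UT by (simp add: assoc_mult_mat[of _ d d _ d _ d])
next
  assume "T * A1 = A2 * T"
  then show "A2 = T * A1 * U" using T U A2 TU by (simp add: assoc_mult_mat[of _ d d _ d _ d])
qed

lemma intertwiner_inverse:
  fixes T U A1 A2 B1 B2 :: "'a::semiring_1 mat"
  assumes T: "T \<in> carrier_mat d d" and U: "U \<in> carrier_mat d d"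
    and A1: "A1 \<in> carrier_mat d d" and A2: "A2 \<in> carrier_mat d d" and B1: "B1 \<in> carrier_mat d n"
    and TU: "T * U = 1\<^sub>m d" and UT: "U * T = 1\<^sub>m d"
    and TA: "T * A1 = A2 * T" and TB: "T * B1 = B2"
  shows "U * A2 = A1 * U" and "U * B2 = B1"
proof -
  have "U * A2 * T = U * T * A1" using TA assoc_mult_mat[OF U T A1] assoc_mult_mat[OF U A2 T] by simp
  then have "U * A2 * T * U = A1 * U" using UT A1 by simp
  then show "U * A2 = A1 * U"
    using assoc_mult_mat[OF mult_carrier_mat[OF U A2] T U] TU U A2 by simp
  show "U * B2 = B1" using TB UT assoc_mult_mat[OF U T B1] B1 by simp
qed

section \<open>Markov parameters\<close>

(* With M(s) = (\<Sum>i. m i / s^(i+1)), markov_poly m k is the polynomial part of s^k M(s). If p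
   annihilates v with respect to A and m i = w^t A^i v, then p(s) w^t (sI - A)^-1 v is the polynomial
   markov_numerator p m (resolvent_markov_identity). *)
primrec markov_poly :: "(nat \<Rightarrow> 'a::comm_ring_1) \<Rightarrow> nat \<Rightarrow> 'a poly" where
  "markov_poly m 0 = 0"
| "markov_poly m (Suc k) = pCons (m k) (markov_poly m k)"

lemma coeff_markov_poly: "coeff (markov_poly m k) e = (if e < k then m (k - 1 - e) else 0)"
proof (induction k arbitrary: e)
  case (Suc k) then show ?case by (cases e) auto
qed simp

lemma markov_poly_diff: "markov_poly (\<lambda>t. m1 t - m2 t) k = markov_poly m1 k - markov_poly m2 k"
  by (induction k) auto

definition markov_numerator :: "'a::comm_ring_1 poly \<Rightarrow> (nat \<Rightarrow> 'a) \<Rightarrow> 'a poly" where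
  "markov_numerator p m = (\<Sum>k\<le>degree p. smult (coeff p k) (markov_poly m k))"

lemma markov_numerator_diff:
  "markov_numerator p (\<lambda>t. m1 t - m2 t) = markov_numerator p m1 - markov_numerator p m2"
  unfolding markov_numerator_def markov_poly_diff by (simp add: smult_diff_right sum_subtractf)

lemma markov_numerator_eq_0_imp_zero:
  fixes p :: "'a::idom poly"
  assumes p: "p \<noteq> 0" and num: "markov_numerator p m = 0"
    and rec: "\<And>i. (\<Sum>k\<le>degree p. coeff p k * m (k + i)) = 0"
  shows "m t = 0"
proof (induction t rule: less_induct)
  case (less t)
  let ?r = "degree p"
  have lead: "f ?r = 0" if sum: "(\<Sum>k\<le>?r. coeff p k * f k) = 0" and low: "\<And>k. k < ?r \<Longrightarrow> f k = 0"
    for f :: "nat \<Rightarrow> 'a"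
  proof -
    have "(\<Sum>k\<le>?r. coeff p k * f k) = coeff p ?r * f ?r"
      using low by (simp add: lessThan_Suc_atMost[symmetric])
    with sum p show ?thesis by simp
  qed
  show "m t = 0"
  proof (cases "t < ?r")
    case True
    define e where "e = ?r - 1 - t"
    have "coeff (markov_numerator p m) e = 0" using num by simp
    then have "(\<Sum>k\<le>?r. coeff p k * (if e < k then m (k - 1 - e) else 0)) = 0"
      unfolding markov_numerator_def coeff_sum by (simp add: coeff_markov_poly)
    from lead[OF this] show ?thesis using True less unfolding e_def by auto
  next
    case False
    from lead[OF rec[of "t - ?r"]] show ?thesis using False less by auto
  qed
qed

definition annihilates :: "'a::comm_ring_1 poly \<Rightarrow> 'a mat \<Rightarrow> 'a vec \<Rightarrow> bool" where
  "annihilates p A v \<longleftrightarrow> (\<forall>i<dim_row A. (\<Sum>k\<le>degree p. coeff p k * (A ^\<^sub>m k *\<^sub>v v) $ i) = 0)"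

lemma annihilates_scalar_prod:
  fixes A :: "'a::comm_ring_1 mat"
  assumes A: "A \<in> carrier_mat d d" and z: "z \<in> carrier_vec d" and ann: "annihilates p A v"
  shows "(\<Sum>k\<le>degree p. coeff p k * (z \<bullet> (A ^\<^sub>m k *\<^sub>v v))) = 0"
proof -
  have "(\<Sum>k\<le>degree p. coeff p k * (z \<bullet> (A ^\<^sub>m k *\<^sub>v v)))
      = (\<Sum>k\<le>degree p. \<Sum>i<d. z $ i * (coeff p k * (A ^\<^sub>m k *\<^sub>v v) $ i))"
    using z A unfolding scalar_prod_def
    by (intro sum.cong refl) (auto simp: sum_distrib_left atLeast0LessThan ac_simps)
  also have "\<dots> = (\<Sum>i<d. z $ i * (\<Sum>k\<le>degree p. coeff p k * (A ^\<^sub>m k *\<^sub>v v) $ i))"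
    by (subst sum.swap) (simp add: sum_distrib_left)
  also have "\<dots> = 0" using ann A unfolding annihilates_def by simp
  finally show ?thesis .
qed

lemma annihilates_markov_recurrence:
  fixes A :: "'a::comm_ring_1 mat"
  assumes A: "A \<in> carrier_mat d d" and v: "v \<in> carrier_vec d" and w: "w \<in> carrier_vec d"
    and ann: "annihilates p A v"
  shows "(\<Sum>k\<le>degree p. coeff p k * (w \<bullet> (A ^\<^sub>m (k + i) *\<^sub>v v))) = 0"
proof -
  let ?z = "transpose_mat (A ^\<^sub>m i) *\<^sub>v w"
  have "w \<bullet> (A ^\<^sub>m (k + i) *\<^sub>v v) = ?z \<bullet> (A ^\<^sub>m k *\<^sub>v v)" for k
    using pow_mat_add[OF A, of i k] transpose_vec_mult_scalar[OF pow_carrier_mat[OF A] _ w, of "A ^\<^sub>m k *\<^sub>v v" i]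
      A v by (simp add: add.commute assoc_mult_mat_vec[of _ d d _ d] mult_mat_vec_carrier[of _ d d])
  moreover have "?z \<in> carrier_vec d" using A w by (intro mult_mat_vec_carrier[of _ d d]) auto
  ultimately show ?thesis using annihilates_scalar_prod[OF A _ ann] by simp
qed

lemma poly_of_coeff_vec:
  fixes c :: "'a::comm_ring_1 vec"
  assumes c: "c \<in> carrier_vec N" and nz: "c \<noteq> 0\<^sub>v N"
  obtains p where "p \<noteq> 0" and "\<And>f. (\<Sum>k\<le>degree p. coeff p k * f k) = (\<Sum>k<N. c $ k * f k)"
proof -
  define p where "p = (\<Sum>k<N. monom (c $ k) k)"
  have coeff_p: "coeff p k = (if k < N then c $ k else 0)" for k
    unfolding p_def by (simp add: coeff_sum)
  have "p \<noteq> 0"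
  proof
    assume "p = 0"
    then have "c $ k = 0" if "k < N" for k using coeff_p[of k] that by simp
    with c nz show False by auto
  qed
  moreover have "(\<Sum>k\<le>degree p. coeff p k * f k) = (\<Sum>k<N. c $ k * f k)" for f
  proof -
    have "N \<noteq> 0" using c nz by auto
    then have "degree p < N" using coeff_p degree_le[of "N - 1" p] by fastforce
    then have "(\<Sum>k\<le>degree p. coeff p k * f k) = (\<Sum>k<N. coeff p k * f k)"
      by (intro sum.mono_neutral_left) (auto simp: coeff_eq_0)
    then show ?thesis by (simp add: coeff_p)
  qed
  ultimately show thesis using that by blast
qed

lemma annihilates_common:
  fixes A1 A2 :: "'a::idom mat"
  assumes A1: "A1 \<in> carrier_mat d1 d1" and A2: "A2 \<in> carrier_mat d2 d2"
  obtains p where "p \<noteq> 0" "annihilates p A1 v1" "annihilates p A2 v2"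
proof -
  define N where "N = Suc (d1 + d2)"
  define K where "K = mat (d1 + d2) N (\<lambda>(i, k).
    if i < d1 then (A1 ^\<^sub>m k *\<^sub>v v1) $ i else (A2 ^\<^sub>m k *\<^sub>v v2) $ (i - d1))"
  obtain c where c: "c \<in> carrier_vec N" "c \<noteq> 0\<^sub>v N" and Kc: "K *\<^sub>v c = 0\<^sub>v (d1 + d2)"
    using wide_mat_kernel_nonzero[of K "d1 + d2" N] unfolding K_def N_def by auto
  obtain p where p: "p \<noteq> 0" and sum_eq: "\<And>f. (\<Sum>k\<le>degree p. coeff p k * f k) = (\<Sum>k<N. c $ k * f k)"
    using poly_of_coeff_vec[OF c] by blast
  have rows: "(\<Sum>k<N. c $ k * K $$ (i, k)) = 0" if "i < d1 + d2" for i
  proof -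
    have "(\<Sum>k<N. c $ k * K $$ (i, k)) = (K *\<^sub>v c) $ i"
      using that c(1) unfolding K_def by (simp add: scalar_prod_def atLeast0LessThan ac_simps)
    with Kc that show ?thesis by simp
  qed
  have "annihilates p A1 v1"
    unfolding annihilates_def sum_eq
  proof (intro allI impI)
    fix i assume "i < dim_row A1"
    then show "(\<Sum>k<N. c $ k * (A1 ^\<^sub>m k *\<^sub>v v1) $ i) = 0"
      using rows[of i] A1 unfolding K_def by simp
  qed
  moreover have "annihilates p A2 v2"
    unfolding annihilates_def sum_eq
  proof (intro allI impI)
    fix i assume "i < dim_row A2"
    then show "(\<Sum>k<N. c $ k * (A2 ^\<^sub>m k *\<^sub>v v2) $ i) = 0"
      using rows[of "d1 + i"] A2 unfolding K_def by simp
  qed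
  ultimately show thesis using p that by blast
qed

lemma resolvent_identities:
  fixes A X :: "'a::comm_ring_1 mat"
  assumes A: "A \<in> carrier_mat d d" and X: "X \<in> carrier_mat d d"
    and left: "(s \<cdot>\<^sub>m 1\<^sub>m d - A) * X = 1\<^sub>m d" and right: "X * (s \<cdot>\<^sub>m 1\<^sub>m d - A) = 1\<^sub>m d"
  shows "s \<cdot>\<^sub>m X = 1\<^sub>m d + A * X" and "A * X = X * A"
proof -
  have eq_left: "s \<cdot>\<^sub>m X - A * X = 1\<^sub>m d"
    using left A X by (simp add: minus_mult_distrib_mat[OF _ A X] mult_smult_assoc_mat[OF one_carrier_mat X])
  have eq_right: "s \<cdot>\<^sub>m X - X * A = 1\<^sub>m d"
    using right A X by (simp add: mult_minus_distrib_mat[OF X _ A] mult_smult_distrib[OF X one_carrier_mat])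
  show "s \<cdot>\<^sub>m X = 1\<^sub>m d + A * X"
  proof (rule eq_matI)
    fix i j assume "i < dim_row (1\<^sub>m d + A * X)" "j < dim_col (1\<^sub>m d + A * X)"
    then have ij: "i < d" "j < d" using A X by auto
    have "(s \<cdot>\<^sub>m X - A * X) $$ (i, j) = 1\<^sub>m d $$ (i, j)" using eq_left by simp
    then show "(s \<cdot>\<^sub>m X) $$ (i, j) = (1\<^sub>m d + A * X) $$ (i, j)"
      using ij A X by (simp add: algebra_simps)
  qed (use A X in auto)
  show "A * X = X * A"
  proof (rule eq_matI)
    fix i j assume "i < dim_row (X * A)" "j < dim_col (X * A)"
    then have "i < d" "j < d" using A X by auto
    have "(s \<cdot>\<^sub>m X - A * X) $$ (i, j) = (s \<cdot>\<^sub>m X - X * A) $$ (i, j)"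
      using eq_left eq_right by simp
    then show "(A * X) $$ (i, j) = (X * A) $$ (i, j)" using \<open>i < d\<close> \<open>j < d\<close> A X by simp
  qed (use A X in auto)
qed

lemma resolvent_shift:
  fixes A X :: "'a::field mat"
  assumes A: "A \<in> carrier_mat d d" and X: "X \<in> carrier_mat d d"
    and left: "(s \<cdot>\<^sub>m 1\<^sub>m d - A) * X = 1\<^sub>m d" and right: "X * (s \<cdot>\<^sub>m 1\<^sub>m d - A) = 1\<^sub>m d"
    and v: "v \<in> carrier_vec d" and w: "w \<in> carrier_vec d"
  shows "s * (w \<bullet> (A ^\<^sub>m k *\<^sub>v (X *\<^sub>v v)))
    = w \<bullet> (A ^\<^sub>m k *\<^sub>v v) + w \<bullet> (A ^\<^sub>m Suc k *\<^sub>v (X *\<^sub>v v))"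
proof -
  have Xv: "X *\<^sub>v v \<in> carrier_vec d" using X v by simp
  have "s \<cdot>\<^sub>v (X *\<^sub>v v) = (s \<cdot>\<^sub>m X) *\<^sub>v v"
    using X v by (intro eq_vecI) (auto simp: scalar_prod_def sum_distrib_left ac_simps)
  also have "\<dots> = v + A *\<^sub>v (X *\<^sub>v v)"
    unfolding resolvent_identities(1)[OF A X left right] using A X v
    by (simp add: add_mult_distrib_mat_vec[of _ d d] assoc_mult_mat_vec[of _ d d _ d])
  finally have sXv: "s \<cdot>\<^sub>v (X *\<^sub>v v) = v + A *\<^sub>v (X *\<^sub>v v)" .
  have "s * (w \<bullet> (A ^\<^sub>m k *\<^sub>v (X *\<^sub>v v))) = w \<bullet> (A ^\<^sub>m k *\<^sub>v (s \<cdot>\<^sub>v (X *\<^sub>v v)))"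
    using A Xv w by (simp add: mult_mat_vec[of _ d d])
  also have "\<dots> = w \<bullet> (A ^\<^sub>m k *\<^sub>v v + A ^\<^sub>m k *\<^sub>v (A *\<^sub>v (X *\<^sub>v v)))"
    unfolding sXv using A Xv v by (simp add: mult_add_distrib_mat_vec[of _ d d])
  also have "\<dots> = w \<bullet> (A ^\<^sub>m k *\<^sub>v v) + w \<bullet> (A ^\<^sub>m Suc k *\<^sub>v (X *\<^sub>v v))"
    using A Xv v
    by (subst scalar_prod_add_distrib[OF w])
      (auto simp: assoc_mult_mat_vec[of _ d d _ d] mult_mat_vec_carrier[of _ d d])
  finally show ?thesis .
qed

lemma resolvent_markov_identity:
  fixes A X :: "'a::field mat"
  assumes A: "A \<in> carrier_mat d d" and X: "X \<in> carrier_mat d d"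
    and left: "(s \<cdot>\<^sub>m 1\<^sub>m d - A) * X = 1\<^sub>m d" and right: "X * (s \<cdot>\<^sub>m 1\<^sub>m d - A) = 1\<^sub>m d"
    and v: "v \<in> carrier_vec d" and w: "w \<in> carrier_vec d" and ann: "annihilates p A v"
  shows "poly p s * (w \<bullet> (X *\<^sub>v v)) = poly (markov_numerator p (\<lambda>t. w \<bullet> (A ^\<^sub>m t *\<^sub>v v))) s"
proof -
  define m where "m t = w \<bullet> (A ^\<^sub>m t *\<^sub>v v)" for t
  define \<gamma> where "\<gamma> k = w \<bullet> (A ^\<^sub>m k *\<^sub>v (X *\<^sub>v v))" for k
  have markov_poly_eq: "poly (markov_poly m k) s = s ^ k * \<gamma> 0 - \<gamma> k" for k
  proof (induction k)
    case (Suc k)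
    then have "poly (markov_poly m (Suc k)) s = m k + s * (s ^ k * \<gamma> 0 - \<gamma> k)" by simp
    also have "\<dots> = s ^ Suc k * \<gamma> 0 - \<gamma> (Suc k)"
      using resolvent_shift[OF A X left right v w, of k] unfolding m_def \<gamma>_def
      by (simp add: algebra_simps)
    finally show ?case .
  qed simp
  have "\<gamma> k = (transpose_mat X *\<^sub>v w) \<bullet> (A ^\<^sub>m k *\<^sub>v v)" for k
  proof -
    have "A ^\<^sub>m k *\<^sub>v (X *\<^sub>v v) = X *\<^sub>v (A ^\<^sub>m k *\<^sub>v v)"
      using pow_mat_intertwine[OF X A A resolvent_identities(2)[OF A X left right, symmetric], of k] A X v
      by (metis assoc_mult_mat_vec pow_carrier_mat)
    then show ?thesis
      unfolding \<gamma>_def using transpose_vec_mult_scalar[OF X _ w, of "A ^\<^sub>m k *\<^sub>v v"] A v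
      by (simp add: mult_mat_vec_carrier[of _ d d])
  qed
  then have annihilated: "(\<Sum>k\<le>degree p. coeff p k * \<gamma> k) = 0"
    using annihilates_scalar_prod[OF A _ ann, of "transpose_mat X *\<^sub>v w"] X w by simp
  have "poly (markov_numerator p m) s = (\<Sum>k\<le>degree p. coeff p k * (s ^ k * \<gamma> 0 - \<gamma> k))"
    unfolding markov_numerator_def by (simp add: poly_sum markov_poly_eq)
  also have "\<dots> = poly p s * \<gamma> 0"
    using annihilated
    by (simp add: poly_altdef right_diff_distrib sum_subtractf sum_distrib_right mult.assoc)
  finally show ?thesis unfolding m_def \<gamma>_def using A X v by simp
qed

lemma eventually_det_resolvent_nonzero:
  fixes A :: "'a::field mat"
  assumes A: "A \<in> carrier_mat d d"
  shows "\<forall>\<^sub>F s in cofinite. det (s \<cdot>\<^sub>m 1\<^sub>m d - A) \<noteq> 0"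
proof -
  have "det (s \<cdot>\<^sub>m 1\<^sub>m d - A) = poly (char_poly A) s" for s
  proof -
    have "s \<cdot>\<^sub>m 1\<^sub>m d - A = - char_matrix A s"
      using A unfolding char_matrix_def by auto
    then show ?thesis using char_poly_matrix[OF A, of s] by simp
  qed
  moreover have "char_poly A \<noteq> 0" using degree_monic_char_poly[OF A] by auto
  ultimately show ?thesis unfolding eventually_cofinite using poly_roots_finite by simp
qed

lemma minv_resolvent_markov_identity:
  fixes A :: "complex mat"
  assumes A: "A \<in> carrier_mat d d" and v: "v \<in> carrier_vec d" and w: "w \<in> carrier_vec d"
    and ann: "annihilates p A v" and det: "det (s \<cdot>\<^sub>m 1\<^sub>m d - A) \<noteq> 0"
  shows "poly p s * (w \<bullet> (minv (s \<cdot>\<^sub>m 1\<^sub>m d - A) *\<^sub>v v))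
    = poly (markov_numerator p (\<lambda>t. w \<bullet> (A ^\<^sub>m t *\<^sub>v v))) s"
proof -
  have "s \<cdot>\<^sub>m 1\<^sub>m d - A \<in> carrier_mat d d" using A by auto
  from minv[OF this det] show ?thesis using resolvent_markov_identity[OF A _ _ _ v w ann] by blast
qed

lemma resolvent_eq_imp_markov_eq:
  fixes A1 A2 :: "complex mat"
  assumes A1: "A1 \<in> carrier_mat d1 d1" and v1: "v1 \<in> carrier_vec d1" and w1: "w1 \<in> carrier_vec d1"
    and A2: "A2 \<in> carrier_mat d2 d2" and v2: "v2 \<in> carrier_vec d2" and w2: "w2 \<in> carrier_vec d2"
    and freq: "\<exists>\<^sub>F s in cofinite.
      w1 \<bullet> (minv (s \<cdot>\<^sub>m 1\<^sub>m d1 - A1) *\<^sub>v v1) = w2 \<bullet> (minv (s \<cdot>\<^sub>m 1\<^sub>m d2 - A2) *\<^sub>v v2)"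
  shows "w1 \<bullet> (A1 ^\<^sub>m t *\<^sub>v v1) = w2 \<bullet> (A2 ^\<^sub>m t *\<^sub>v v2)"
proof -
  obtain p where p: "p \<noteq> 0" and ann1: "annihilates p A1 v1" and ann2: "annihilates p A2 v2"
    using annihilates_common[OF A1 A2] .
  define m1 where "m1 t = w1 \<bullet> (A1 ^\<^sub>m t *\<^sub>v v1)" for t
  define m2 where "m2 t = w2 \<bullet> (A2 ^\<^sub>m t *\<^sub>v v2)" for t
  have "\<exists>\<^sub>F s in cofinite. poly (markov_numerator p m1 - markov_numerator p m2) s = 0"
    using freq eventually_det_resolvent_nonzero[OF A1] eventually_det_resolvent_nonzero[OF A2]
  proof (elim frequently_rev_mp, eventually_elim)
    case (elim s)
    then show ?case unfolding m1_def m2_def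
      using minv_resolvent_markov_identity[OF A1 v1 w1 ann1, of s]
        minv_resolvent_markov_identity[OF A2 v2 w2 ann2, of s] by simp
  qed
  then have "markov_numerator p m1 - markov_numerator p m2 = 0"
    unfolding frequently_cofinite
    using poly_roots_finite[of "markov_numerator p m1 - markov_numerator p m2"] by auto
  then have numerator: "markov_numerator p (\<lambda>t. m1 t - m2 t) = 0"
    unfolding markov_numerator_diff .
  have "(\<Sum>k\<le>degree p. coeff p k * (m1 (k + i) - m2 (k + i))) = 0" for i
    using annihilates_markov_recurrence[OF A1 v1 w1 ann1, of i]
      annihilates_markov_recurrence[OF A2 v2 w2 ann2, of i]
    unfolding m1_def m2_def by (simp add: right_diff_distrib sum_subtractf)
  from markov_numerator_eq_0_imp_zero[OF p numerator this] show ?thesis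
    unfolding m1_def m2_def by simp
qed

lemma realization_carrier:
  assumes "is_realization n G d A B C"
  shows "A \<in> carrier_mat d d" "B \<in> carrier_mat d n" "C \<in> carrier_mat n d"
  using assms unfolding is_realization_def by auto

lemma realization_resolvents_agree:
  assumes R1: "is_realization n G d1 A1 B1 C1" and R2: "is_realization n G d2 A2 B2 C2"
  shows "\<exists>\<^sub>F s in cofinite.
    C1 * minv (s \<cdot>\<^sub>m 1\<^sub>m d1 - A1) * B1 = C2 * minv (s \<cdot>\<^sub>m 1\<^sub>m d2 - A2) * B2
    \<and> minv (s \<cdot>\<^sub>m 1\<^sub>m d1 - A1) \<in> carrier_mat d1 d1 \<and> minv (s \<cdot>\<^sub>m 1\<^sub>m d2 - A2) \<in> carrier_mat d2 d2"
proof -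
  note A1 = realization_carrier(1)[OF R1] and A2 = realization_carrier(1)[OF R2]
  have G1: "\<forall>\<^sub>F s in cofinite. G s = C1 * minv (s \<cdot>\<^sub>m 1\<^sub>m d1 - A1) * B1"
    and G2: "\<forall>\<^sub>F s in cofinite. G s = C2 * minv (s \<cdot>\<^sub>m 1\<^sub>m d2 - A2) * B2"
    using R1 R2 unfolding is_realization_def by blast+
  have "\<forall>\<^sub>F s in cofinite.
    C1 * minv (s \<cdot>\<^sub>m 1\<^sub>m d1 - A1) * B1 = C2 * minv (s \<cdot>\<^sub>m 1\<^sub>m d2 - A2) * B2
    \<and> minv (s \<cdot>\<^sub>m 1\<^sub>m d1 - A1) \<in> carrier_mat d1 d1 \<and> minv (s \<cdot>\<^sub>m 1\<^sub>m d2 - A2) \<in> carrier_mat d2 d2"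
    using G1 G2 eventually_det_resolvent_nonzero[OF A1] eventually_det_resolvent_nonzero[OF A2]
  proof eventually_elim
    case (elim s)
    have "s \<cdot>\<^sub>m 1\<^sub>m d1 - A1 \<in> carrier_mat d1 d1" "s \<cdot>\<^sub>m 1\<^sub>m d2 - A2 \<in> carrier_mat d2 d2"
      using A1 A2 by auto
    from minv(1)[OF this(1) elim(3)] minv(1)[OF this(2) elim(4)] elim(1,2) show ?case by simp
  qed
  moreover have "cofinite \<noteq> (bot :: complex filter)" by (simp add: infinite_UNIV_char_0)
  ultimately show ?thesis using eventually_frequently by blast
qed

lemma realization_markov_eq:
  assumes R1: "is_realization n G d1 A1 B1 C1" and R2: "is_realization n G d2 A2 B2 C2"
  shows "C1 * A1 ^\<^sub>m k * B1 = C2 * A2 ^\<^sub>m k * B2"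
proof (rule eq_matI)
  note A1 = realization_carrier(1)[OF R1] and B1 = realization_carrier(2)[OF R1]
    and C1 = realization_carrier(3)[OF R1]
  note A2 = realization_carrier(1)[OF R2] and B2 = realization_carrier(2)[OF R2]
    and C2 = realization_carrier(3)[OF R2]
  fix a b assume "a < dim_row (C2 * A2 ^\<^sub>m k * B2)" "b < dim_col (C2 * A2 ^\<^sub>m k * B2)"
  then have a: "a < n" and b: "b < n" using C2 B2 by auto
  have "\<exists>\<^sub>F s in cofinite. row C1 a \<bullet> (minv (s \<cdot>\<^sub>m 1\<^sub>m d1 - A1) *\<^sub>v col B1 b)
      = row C2 a \<bullet> (minv (s \<cdot>\<^sub>m 1\<^sub>m d2 - A2) *\<^sub>v col B2 b)"
    using realization_resolvents_agree[OF R1 R2]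
    by (rule frequently_elim1) (metis index_mult_mult_mat[OF C1 _ B1 a b] index_mult_mult_mat[OF C2 _ B2 a b])
  moreover have "col B1 b \<in> carrier_vec d1" "row C1 a \<in> carrier_vec d1"
    and "col B2 b \<in> carrier_vec d2" "row C2 a \<in> carrier_vec d2"
    using B1 C1 B2 C2 a b by auto
  ultimately have "row C1 a \<bullet> (A1 ^\<^sub>m k *\<^sub>v col B1 b) = row C2 a \<bullet> (A2 ^\<^sub>m k *\<^sub>v col B2 b)"
    using resolvent_eq_imp_markov_eq[OF A1 _ _ A2] by blast
  then show "(C1 * A1 ^\<^sub>m k * B1) $$ (a, b) = (C2 * A2 ^\<^sub>m k * B2) $$ (a, b)"
    using index_mult_mult_mat[OF C1 pow_carrier_mat[OF A1] B1 a b]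
      index_mult_mult_mat[OF C2 pow_carrier_mat[OF A2] B2 a b] by simp
qed (use realization_carrier[OF R1] realization_carrier[OF R2] in auto)

section \<open>Kalman matrices and similarity of minimal realizations\<close>

lemma ctrb_mat_carrier:
  assumes "A \<in> carrier_mat d d" and "B \<in> carrier_mat d n"
  shows "ctrb_mat A B \<in> carrier_mat d (d * n)"
  using assms unfolding ctrb_mat_def Let_def by simp

lemma obsv_mat_carrier:
  assumes "A \<in> carrier_mat d d" and "C \<in> carrier_mat n d"
  shows "obsv_mat A C \<in> carrier_mat (d * n) d"
  using assms unfolding obsv_mat_def Let_def by simp

lemma col_ctrb_mat:
  fixes A B :: "complex mat"
  assumes A: "A \<in> carrier_mat d d" and B: "B \<in> carrier_mat d n" and j: "j < d * n"
  shows "col (ctrb_mat A B) j = col (A ^\<^sub>m (j div n) * B) (j mod n)"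
proof -
  have "j mod n < n" using j by (cases n) auto
  then show ?thesis using A B j unfolding ctrb_mat_def Let_def by (intro eq_vecI) auto
qed

lemma row_obsv_mat:
  fixes A C :: "complex mat"
  assumes A: "A \<in> carrier_mat d d" and C: "C \<in> carrier_mat n d" and i: "i < d * n"
  shows "row (obsv_mat A C) i = row (C * A ^\<^sub>m (i div n)) (i mod n)"
proof -
  have im: "i mod n < n" using i by (cases n) auto
  show ?thesis
  proof (rule eq_vecI)
    fix k assume "k < dim_vec (row (C * A ^\<^sub>m (i div n)) (i mod n))"
    then have "k < d" using A C by (simp split: if_splits)
    then show "row (obsv_mat A C) i $ k = row (C * A ^\<^sub>m (i div n)) (i mod n) $ k"
      using A C i im unfolding obsv_mat_def Let_def by simp
  qed (use A C in \<open>simp add: obsv_mat_def Let_def\<close>)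
qed

lemma controllable_iff_right_invertible:
  assumes A: "A \<in> carrier_mat d d" and B: "B \<in> carrier_mat d n"
  shows "controllable A B \<longleftrightarrow> (\<exists>R \<in> carrier_mat (d * n) d. ctrb_mat A B * R = 1\<^sub>m d)"
  using vec_space.rank_eq_iff_right_invertible[OF ctrb_mat_carrier[OF A B]] A
  unfolding controllable_def by simp

lemma observable_iff_left_invertible:
  assumes A: "A \<in> carrier_mat d d" and C: "C \<in> carrier_mat n d"
  shows "observable A C \<longleftrightarrow> (\<exists>L \<in> carrier_mat d (d * n). L * obsv_mat A C = 1\<^sub>m d)"
proof -
  note O = obsv_mat_carrier[OF A C]
  have Ot: "transpose_mat (obsv_mat A C) \<in> carrier_mat d (d * n)" using O by simp
  have "observable A C \<longleftrightarrow> (\<exists>R \<in> carrier_mat (d * n) d. transpose_mat (obsv_mat A C) * R = 1\<^sub>m d)"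
    using vec_space.rank_eq_iff_right_invertible[OF Ot] A unfolding observable_def by simp
  also have "\<dots> \<longleftrightarrow> (\<exists>L \<in> carrier_mat d (d * n). L * obsv_mat A C = 1\<^sub>m d)"
  proof
    assume "\<exists>R \<in> carrier_mat (d * n) d. transpose_mat (obsv_mat A C) * R = 1\<^sub>m d"
    then obtain R where R: "R \<in> carrier_mat (d * n) d" and "transpose_mat (obsv_mat A C) * R = 1\<^sub>m d"
      by blast
    then have "transpose_mat R * obsv_mat A C = 1\<^sub>m d"
      using transpose_mult[OF Ot R] by (metis transpose_one transpose_transpose)
    with R show "\<exists>L \<in> carrier_mat d (d * n). L * obsv_mat A C = 1\<^sub>m d" by auto
  next
    assume "\<exists>L \<in> carrier_mat d (d * n). L * obsv_mat A C = 1\<^sub>m d"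
    then obtain L where L: "L \<in> carrier_mat d (d * n)" and "L * obsv_mat A C = 1\<^sub>m d" by blast
    then have "transpose_mat (obsv_mat A C) * transpose_mat L = 1\<^sub>m d"
      using transpose_mult[OF L O] by simp
    with L show "\<exists>R \<in> carrier_mat (d * n) d. transpose_mat (obsv_mat A C) * R = 1\<^sub>m d" by auto
  qed
  finally show ?thesis .
qed

lemma obsv_pow_ctrb_index:
  fixes A B C :: "complex mat"
  assumes A: "A \<in> carrier_mat d d" and B: "B \<in> carrier_mat d n" and C: "C \<in> carrier_mat n d"
    and i: "i < d * n" and j: "j < d * n"
  shows "(obsv_mat A C * A ^\<^sub>m e * ctrb_mat A B) $$ (i, j)
    = (C * A ^\<^sub>m (i div n + e + j div n) * B) $$ (i mod n, j mod n)"
proof -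
  have im: "i mod n < n" and jm: "j mod n < n" using i j by (cases n; simp)+
  note O = obsv_mat_carrier[OF A C] and K = ctrb_mat_carrier[OF A B]
  let ?Ci = "C * A ^\<^sub>m (i div n)" and ?Bj = "A ^\<^sub>m (j div n) * B"
  have Ci: "?Ci \<in> carrier_mat n d" and Bj: "?Bj \<in> carrier_mat d n" using A B C by auto
  have "(obsv_mat A C * A ^\<^sub>m e * ctrb_mat A B) $$ (i, j)
      = row (obsv_mat A C * A ^\<^sub>m e) i \<bullet> col (ctrb_mat A B) j"
    using O K A i j by simp
  also have "\<dots> = row (?Ci * A ^\<^sub>m e) (i mod n) \<bullet> col ?Bj (j mod n)"
    by (simp only: row_mult[OF O pow_carrier_mat[OF A] i] row_mult[OF Ci pow_carrier_mat[OF A] im]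
        row_obsv_mat[OF A C i] col_ctrb_mat[OF A B j])
  also have "\<dots> = (?Ci * A ^\<^sub>m e * ?Bj) $$ (i mod n, j mod n)"
    by (rule index_mult_mat(1)[symmetric]) (use B C im jm in simp_all)
  also have "?Ci * A ^\<^sub>m e * ?Bj = C * (A ^\<^sub>m (i div n) * A ^\<^sub>m e * A ^\<^sub>m (j div n)) * B"
    using A B C by (simp add: assoc_mult_mat[of _ n d _ d _ n] assoc_mult_mat[of _ n d _ d _ d]
        assoc_mult_mat[of _ d d _ d _ n] assoc_mult_mat[of _ d d _ d _ d]
        mult_carrier_mat[of _ d d _ d] mult_carrier_mat[of _ d d _ n] mult_carrier_mat[of _ n d _ d])
  also have "A ^\<^sub>m (i div n) * A ^\<^sub>m e * A ^\<^sub>m (j div n) = A ^\<^sub>m (i div n + e + j div n)"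
    by (simp add: pow_mat_add[OF A])
  finally show ?thesis .
qed

lemma obsv_pow_ctrb_eq:
  fixes A1 B1 C1 A2 B2 C2 :: "complex mat"
  assumes A1: "A1 \<in> carrier_mat d d" and B1: "B1 \<in> carrier_mat d n" and C1: "C1 \<in> carrier_mat n d"
    and A2: "A2 \<in> carrier_mat d d" and B2: "B2 \<in> carrier_mat d n" and C2: "C2 \<in> carrier_mat n d"
    and markov: "\<And>k. C1 * A1 ^\<^sub>m k * B1 = C2 * A2 ^\<^sub>m k * B2"
  shows "obsv_mat A1 C1 * A1 ^\<^sub>m e * ctrb_mat A1 B1 = obsv_mat A2 C2 * A2 ^\<^sub>m e * ctrb_mat A2 B2"
proof (rule eq_matI)
  fix i j
  assume "i < dim_row (obsv_mat A2 C2 * A2 ^\<^sub>m e * ctrb_mat A2 B2)"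
    and "j < dim_col (obsv_mat A2 C2 * A2 ^\<^sub>m e * ctrb_mat A2 B2)"
  then have "i < d * n" "j < d * n"
    using obsv_mat_carrier[OF A2 C2] ctrb_mat_carrier[OF A2 B2] by auto
  then show "(obsv_mat A1 C1 * A1 ^\<^sub>m e * ctrb_mat A1 B1) $$ (i, j)
      = (obsv_mat A2 C2 * A2 ^\<^sub>m e * ctrb_mat A2 B2) $$ (i, j)"
    by (simp only: obsv_pow_ctrb_index[OF A1 B1 C1] obsv_pow_ctrb_index[OF A2 B2 C2] markov)
qed (use obsv_mat_carrier[OF A1 C1] ctrb_mat_carrier[OF A1 B1] obsv_mat_carrier[OF A2 C2]
    ctrb_mat_carrier[OF A2 B2] in auto)

lemma ctrb_mat_mult_select:
  fixes A B :: "complex mat"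
  assumes A: "A \<in> carrier_mat d d" and B: "B \<in> carrier_mat d n"
  shows "ctrb_mat A B * mat (d * n) n (\<lambda>(j, q). if j = q then 1 else 0) = B"
proof (rule eq_matI)
  fix i q assume "i < dim_row B" "q < dim_col B"
  then have i: "i < d" and q: "q < n" using B by auto
  then have qd: "q < d * n" by (cases d) auto
  have "(ctrb_mat A B * mat (d * n) n (\<lambda>(j, q). if j = q then 1 else 0)) $$ (i, q)
      = (\<Sum>j\<in>{0..<d * n}. ctrb_mat A B $$ (i, j) * (if j = q then 1 else 0))"
    using ctrb_mat_carrier[OF A B] i q by (simp add: scalar_prod_def)
  also have "\<dots> = (\<Sum>j\<in>{0..<d * n}. if j = q then ctrb_mat A B $$ (i, j) else 0)"
    by (intro sum.cong) auto
  also have "\<dots> = B $$ (i, q)" using i q qd A B unfolding ctrb_mat_def Let_def by simp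
  finally show "(ctrb_mat A B * mat (d * n) n (\<lambda>(j, q). if j = q then 1 else 0)) $$ (i, q) = B $$ (i, q)" .
qed (use B ctrb_mat_carrier[OF A B] in auto)

lemma select_mult_obsv_mat:
  fixes A C :: "complex mat"
  assumes A: "A \<in> carrier_mat d d" and C: "C \<in> carrier_mat n d"
  shows "mat n (d * n) (\<lambda>(p, i). if i = p then 1 else 0) * obsv_mat A C = C"
proof (rule eq_matI)
  fix p j assume "p < dim_row C" "j < dim_col C"
  then have p: "p < n" and j: "j < d" using C by auto
  then have pd: "p < d * n" by (cases d) auto
  have "(mat n (d * n) (\<lambda>(p, i). if i = p then 1 else 0) * obsv_mat A C) $$ (p, j)
      = (\<Sum>i\<in>{0..<d * n}. (if i = p then 1 else 0) * obsv_mat A C $$ (i, j))"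
    using obsv_mat_carrier[OF A C] p j by (simp add: scalar_prod_def)
  also have "\<dots> = (\<Sum>i\<in>{0..<d * n}. if i = p then obsv_mat A C $$ (i, j) else 0)"
    by (intro sum.cong) auto
  also have "\<dots> = C $$ (p, j)" using p j pd A C unfolding obsv_mat_def Let_def by simp
  finally show "(mat n (d * n) (\<lambda>(p, i). if i = p then 1 else 0) * obsv_mat A C) $$ (p, j) = C $$ (p, j)" .
qed (use C obsv_mat_carrier[OF A C] in auto)

lemma hankel_factorizations_similar:
  fixes O1 K1 A1 O2 K2 A2 L R :: "'a::semiring_1 mat"
  assumes O1: "O1 \<in> carrier_mat m d" and K1: "K1 \<in> carrier_mat d m" and A1: "A1 \<in> carrier_mat d d"
    and O2: "O2 \<in> carrier_mat m d" and K2: "K2 \<in> carrier_mat d m" and A2: "A2 \<in> carrier_mat d d"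
    and L: "L \<in> carrier_mat d m" and R: "R \<in> carrier_mat m d"
    and LO2: "L * O2 = 1\<^sub>m d" and K2R: "K2 * R = 1\<^sub>m d"
    and H0: "O1 * K1 = O2 * K2" and H1: "O1 * A1 * K1 = O2 * A2 * K2"
  shows "L * O1 * K1 = K2" and "O1 * (K1 * R) = O2" and "L * O1 * (K1 * R) = 1\<^sub>m d"
    and "L * O1 * A1 * (K1 * R) = A2"
proof -
  show "L * O1 * K1 = K2"
    using assoc_mult_mat[OF L O1 K1] assoc_mult_mat[OF L O2 K2] H0 LO2 K2 by simp
  show OR: "O1 * (K1 * R) = O2"
    using assoc_mult_mat[OF O1 K1 R] assoc_mult_mat[OF O2 K2 R] H0 K2R O2 by simp
  show "L * O1 * (K1 * R) = 1\<^sub>m d"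
    using assoc_mult_mat[OF L O1 mult_carrier_mat[OF K1 R]] OR LO2 by simp
  have O1A1: "O1 * A1 \<in> carrier_mat m d" and O2A2: "O2 * A2 \<in> carrier_mat m d"
    using O1 A1 O2 A2 by auto
  have "L * O1 * A1 * (K1 * R) = L * (O1 * A1) * K1 * R"
    using assoc_mult_mat[OF L O1 A1] assoc_mult_mat[OF mult_carrier_mat[OF L O1A1] K1 R] by simp
  also have "\<dots> = L * (O2 * A2) * K2 * R"
    using assoc_mult_mat[OF L O1A1 K1] assoc_mult_mat[OF L O2A2 K2] H1 by simp
  also have "\<dots> = A2"
    using assoc_mult_mat[OF L O2 A2] assoc_mult_mat[OF mult_carrier_mat[OF L O2A2] K2 R] LO2 K2R A2
    by simp
  finally show "L * O1 * A1 * (K1 * R) = A2" .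
qed

lemma markov_eq_imp_similar:
  fixes A1 B1 C1 A2 B2 C2 :: "complex mat"
  assumes A1: "A1 \<in> carrier_mat d d" and B1: "B1 \<in> carrier_mat d n" and C1: "C1 \<in> carrier_mat n d"
    and A2: "A2 \<in> carrier_mat d d" and B2: "B2 \<in> carrier_mat d n" and C2: "C2 \<in> carrier_mat n d"
    and markov: "\<And>k. C1 * A1 ^\<^sub>m k * B1 = C2 * A2 ^\<^sub>m k * B2"
    and co2: "controllable A2 B2" and ob2: "observable A2 C2"
  obtains T U where "T \<in> carrier_mat d d" "U \<in> carrier_mat d d" "T * U = 1\<^sub>m d" "U * T = 1\<^sub>m d"
    "T * A1 = A2 * T" "T * B1 = B2" "C2 * T = C1"
proof -
  note K1 = ctrb_mat_carrier[OF A1 B1] and K2 = ctrb_mat_carrier[OF A2 B2]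
    and O1 = obsv_mat_carrier[OF A1 C1] and O2 = obsv_mat_carrier[OF A2 C2]
  obtain R where R: "R \<in> carrier_mat (d * n) d" and K2R: "ctrb_mat A2 B2 * R = 1\<^sub>m d"
    using co2 controllable_iff_right_invertible[OF A2 B2] by blast
  obtain L where L: "L \<in> carrier_mat d (d * n)" and LO2: "L * obsv_mat A2 C2 = 1\<^sub>m d"
    using ob2 observable_iff_left_invertible[OF A2 C2] by blast
  have "obsv_mat A1 C1 * ctrb_mat A1 B1 = obsv_mat A2 C2 * ctrb_mat A2 B2"
    and "obsv_mat A1 C1 * A1 * ctrb_mat A1 B1 = obsv_mat A2 C2 * A2 * ctrb_mat A2 B2"
    using obsv_pow_ctrb_eq[OF A1 B1 C1 A2 B2 C2 markov, of 0]
      obsv_pow_ctrb_eq[OF A1 B1 C1 A2 B2 C2 markov, of 1] A1 A2 O1 O2 by simp_all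
  note fact = hankel_factorizations_similar[OF O1 K1 A1 O2 K2 A2 L R LO2 K2R this]
  define T U where "T = L * obsv_mat A1 C1" and "U = ctrb_mat A1 B1 * R"
  have T: "T \<in> carrier_mat d d" and U: "U \<in> carrier_mat d d" unfolding T_def U_def using L O1 K1 R by auto
  have TU: "T * U = 1\<^sub>m d" using fact(3) unfolding T_def U_def .
  have UT: "U * T = 1\<^sub>m d" using mat_mult_left_right_inverse[OF T U TU] .
  show thesis
  proof (rule that[OF T U TU UT])
    show "T * A1 = A2 * T"
      using fact(4)[folded T_def U_def, symmetric] UT T U A1 by (simp add: assoc_mult_mat[of _ d d _ d _ d])
    define E where "E = mat (d * n) n (\<lambda>(j, q). if j = q then 1 else 0 :: complex)"
    define F where "F = mat n (d * n) (\<lambda>(p, i). if i = p then 1 else 0 :: complex)"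
    have E: "E \<in> carrier_mat (d * n) n" and F: "F \<in> carrier_mat n (d * n)"
      unfolding E_def F_def by auto
    have "T * B1 = T * ctrb_mat A1 B1 * E"
      using ctrb_mat_mult_select[OF A1 B1, folded E_def] assoc_mult_mat[OF T K1 E] by simp
    then show "T * B1 = B2" using fact(1)[folded T_def] ctrb_mat_mult_select[OF A2 B2, folded E_def] by simp
    have "C1 * U = F * (obsv_mat A1 C1 * U)"
      using select_mult_obsv_mat[OF A1 C1, folded F_def] assoc_mult_mat[OF F O1 U] by simp
    then have "C1 * U = C2" using fact(2)[folded U_def] select_mult_obsv_mat[OF A2 C2, folded F_def] by simp
    then show "C2 * T = C1" using assoc_mult_mat[OF C1 U T] UT C1 by simp
  qed
qed

lemma ctrb_mat_intertwine:
  fixes S A1 A2 B1 B2 :: "complex mat"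
  assumes S: "S \<in> carrier_mat d d" and A1: "A1 \<in> carrier_mat d d" and A2: "A2 \<in> carrier_mat d d"
    and B1: "B1 \<in> carrier_mat d n" and B2: "B2 \<in> carrier_mat d n"
    and SA: "S * A1 = A2 * S" and SB: "S * B1 = B2"
  shows "S * ctrb_mat A1 B1 = ctrb_mat A2 B2"
proof (rule mat_col_eqI)
  fix j assume "j < dim_col (ctrb_mat A2 B2)"
  then have j: "j < d * n" using ctrb_mat_carrier[OF A2 B2] by simp
  then have jn: "j mod n < n" by (cases n) auto
  let ?q = "j div n"
  have "S * (A1 ^\<^sub>m ?q * B1) = A2 ^\<^sub>m ?q * B2"
    using assoc_mult_mat[OF S pow_carrier_mat[OF A1] B1] pow_mat_intertwine[OF S A1 A2 SA]
      assoc_mult_mat[OF pow_carrier_mat[OF A2] S B1] SB by simp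
  then show "col (S * ctrb_mat A1 B1) j = col (ctrb_mat A2 B2) j"
    using col_mult2[OF S ctrb_mat_carrier[OF A1 B1] j] col_ctrb_mat[OF A1 B1 j] col_ctrb_mat[OF A2 B2 j]
      col_mult2[OF S mult_carrier_mat[OF pow_carrier_mat[OF A1, of ?q] B1] jn] by simp
qed (use S ctrb_mat_carrier[OF A1 B1] ctrb_mat_carrier[OF A2 B2] in auto)

lemma intertwiner_unique:
  fixes S1 S2 A1 A2 B1 B2 :: "complex mat"
  assumes A1: "A1 \<in> carrier_mat d d" and A2: "A2 \<in> carrier_mat d d"
    and B1: "B1 \<in> carrier_mat d n" and B2: "B2 \<in> carrier_mat d n" and co1: "controllable A1 B1"
    and S1: "S1 \<in> carrier_mat d d" "S1 * A1 = A2 * S1" "S1 * B1 = B2"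
    and S2: "S2 \<in> carrier_mat d d" "S2 * A1 = A2 * S2" "S2 * B1 = B2"
  shows "S1 = S2"
proof -
  obtain R where R: "R \<in> carrier_mat (d * n) d" and KR: "ctrb_mat A1 B1 * R = 1\<^sub>m d"
    using co1 controllable_iff_right_invertible[OF A1 B1] by blast
  note K = ctrb_mat_carrier[OF A1 B1]
  have "S1 = S1 * ctrb_mat A1 B1 * R" using assoc_mult_mat[OF S1(1) K R] KR S1(1) by simp
  also have "\<dots> = S2 * ctrb_mat A1 B1 * R"
    using ctrb_mat_intertwine[OF S1(1) A1 A2 B1 B2 S1(2,3)] ctrb_mat_intertwine[OF S2(1) A1 A2 B1 B2 S2(2,3)]
    by simp
  also have "\<dots> = S2" using assoc_mult_mat[OF S2(1) K R] KR S2(1) by simp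
  finally show ?thesis .
qed

lemma ctrb_mat_transpose:
  fixes A C :: "complex mat"
  assumes A: "A \<in> carrier_mat d d" and C: "C \<in> carrier_mat n d"
  shows "ctrb_mat (transpose_mat A) (transpose_mat C) = transpose_mat (obsv_mat A C)"
proof (rule eq_matI)
  fix i j assume "i < dim_row (transpose_mat (obsv_mat A C))" "j < dim_col (transpose_mat (obsv_mat A C))"
  then have i: "i < d" and j: "j < d * n" using obsv_mat_carrier[OF A C] by auto
  then have jn: "j mod n < n" by (cases n) auto
  have P: "A ^\<^sub>m (j div n) \<in> carrier_mat d d" using A by simp
  have "ctrb_mat (transpose_mat A) (transpose_mat C) $$ (i, j)
      = (transpose_mat A ^\<^sub>m (j div n) * transpose_mat C) $$ (i, j mod n)"
    using A C i j unfolding ctrb_mat_def Let_def by simp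
  also have "transpose_mat A ^\<^sub>m (j div n) * transpose_mat C = transpose_mat (C * A ^\<^sub>m (j div n))"
    using transpose_pow_mat[OF A] transpose_mult[OF C P] by simp
  also have "transpose_mat (C * A ^\<^sub>m (j div n)) $$ (i, j mod n) = (C * A ^\<^sub>m (j div n)) $$ (j mod n, i)"
    using i jn carrier_matD[OF mult_carrier_mat[OF C P]] by simp
  also have "\<dots> = transpose_mat (obsv_mat A C) $$ (i, j)"
    using A C i j jn unfolding obsv_mat_def Let_def by simp
  finally show "ctrb_mat (transpose_mat A) (transpose_mat C) $$ (i, j) = transpose_mat (obsv_mat A C) $$ (i, j)" .
qed (use A C obsv_mat_carrier[OF A C] in \<open>auto simp: ctrb_mat_def Let_def\<close>)

lemma controllable_transpose_iff:
  assumes A: "A \<in> carrier_mat d d" and C: "C \<in> carrier_mat n d"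
  shows "controllable (transpose_mat A) (transpose_mat C) \<longleftrightarrow> observable A C"
  unfolding controllable_def observable_def ctrb_mat_transpose[OF A C] using A by simp

lemma observable_transpose_iff:
  assumes A: "A \<in> carrier_mat d d" and B: "B \<in> carrier_mat d n"
  shows "observable (transpose_mat A) (transpose_mat B) \<longleftrightarrow> controllable A B"
  using controllable_transpose_iff[of "transpose_mat A" d "transpose_mat B" n] A B by simp

lemma realization_transpose:
  assumes R: "is_realization n G d A B C"
    and sym: "\<forall>\<^sub>F s in cofinite. G s = transpose_mat (G s)"
  shows "is_realization n G d (transpose_mat A) (transpose_mat C) (transpose_mat B)"
proof -
  note A = realization_carrier(1)[OF R] and B = realization_carrier(2)[OF R]
    and C = realization_carrier(3)[OF R]
  have G: "\<forall>\<^sub>F s in cofinite. G s = C * minv (s \<cdot>\<^sub>m 1\<^sub>m d - A) * B"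
    using R unfolding is_realization_def by blast
  have "\<forall>\<^sub>F s in cofinite.
      G s = transpose_mat B * minv (s \<cdot>\<^sub>m 1\<^sub>m d - transpose_mat A) * transpose_mat C"
    using G sym eventually_det_resolvent_nonzero[OF A]
  proof eventually_elim
    case (elim s)
    have M: "s \<cdot>\<^sub>m 1\<^sub>m d - A \<in> carrier_mat d d" using A by auto
    note X = minv(1)[OF M elim(3)]
    have "transpose_mat (s \<cdot>\<^sub>m 1\<^sub>m d - A) = s \<cdot>\<^sub>m 1\<^sub>m d - transpose_mat A"
      using A by (intro eq_matI) auto
    then have Xt: "transpose_mat (minv (s \<cdot>\<^sub>m 1\<^sub>m d - A)) = minv (s \<cdot>\<^sub>m 1\<^sub>m d - transpose_mat A)"
      using minv_transpose[OF M elim(3)] by simp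
    have "G s = transpose_mat (C * minv (s \<cdot>\<^sub>m 1\<^sub>m d - A) * B)" using elim(1,2) by simp
    also have "\<dots> = transpose_mat B * (transpose_mat (minv (s \<cdot>\<^sub>m 1\<^sub>m d - A)) * transpose_mat C)"
      using transpose_mult[OF mult_carrier_mat[OF C X] B] transpose_mult[OF C X] by simp
    also have "\<dots> = transpose_mat B * minv (s \<cdot>\<^sub>m 1\<^sub>m d - transpose_mat A) * transpose_mat C"
      unfolding Xt using assoc_mult_mat[of "transpose_mat B" n d _ d "transpose_mat C" n] B C X Xt
      by (metis transpose_carrier_mat)
    finally show ?case .
  qed
  then show ?thesis unfolding is_realization_def using A B C by simp
qed

lemma minv_resolvent_change_of_basis:
  fixes A R P :: "complex mat"
  assumes A: "A \<in> carrier_mat d d" and R: "R \<in> carrier_mat d d" and P: "P \<in> carrier_mat d d"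
    and RP: "R * P = 1\<^sub>m d" and PR: "P * R = 1\<^sub>m d" and det: "det (s \<cdot>\<^sub>m 1\<^sub>m d - A) \<noteq> 0"
  shows "minv (s \<cdot>\<^sub>m 1\<^sub>m d - R * A * P) = R * minv (s \<cdot>\<^sub>m 1\<^sub>m d - A) * P"
proof -
  note [simp] = A R P
  note assoc = assoc_mult_mat[of _ d d _ d _ d] mult_carrier_mat[of _ d d _ d]
  have M: "s \<cdot>\<^sub>m 1\<^sub>m d - A \<in> carrier_mat d d" by (intro minus_carrier_mat) auto
  define X where "X = minv (s \<cdot>\<^sub>m 1\<^sub>m d - A)"
  have X[simp]: "X \<in> carrier_mat d d" and MX: "(s \<cdot>\<^sub>m 1\<^sub>m d - A) * X = 1\<^sub>m d"
    using minv[OF M det] unfolding X_def by auto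
  have conj: "s \<cdot>\<^sub>m 1\<^sub>m d - R * A * P = R * (s \<cdot>\<^sub>m 1\<^sub>m d - A) * P"
  proof -
    have "R * (s \<cdot>\<^sub>m 1\<^sub>m d - A) * P = (s \<cdot>\<^sub>m R - R * A) * P"
      using mult_minus_distrib_mat[OF R _ A, of "s \<cdot>\<^sub>m 1\<^sub>m d"] mult_smult_distrib[OF R one_carrier_mat, of s]
      by (simp add: right_mult_one_mat[OF R])
    also have "\<dots> = s \<cdot>\<^sub>m (R * P) - R * A * P"
      using minus_mult_distrib_mat[of "s \<cdot>\<^sub>m R" d d "R * A" P d] mult_smult_assoc_mat[OF R P] by (simp add: assoc)
    finally show ?thesis using RP by simp
  qed
  have "(s \<cdot>\<^sub>m 1\<^sub>m d - A) * (X * Y) = Y" and "P * (R * Y) = Y" if "Y \<in> carrier_mat d d" for Y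
    using that MX PR assoc_mult_mat[OF M X that] assoc_mult_mat[OF P R that] by simp_all
  then have "(s \<cdot>\<^sub>m 1\<^sub>m d - R * A * P) * (R * X * P) = 1\<^sub>m d"
    unfolding conj using RP M by (simp add: assoc)
  moreover have "s \<cdot>\<^sub>m 1\<^sub>m d - R * A * P \<in> carrier_mat d d" "R * X * P \<in> carrier_mat d d"
    by (auto simp: assoc intro!: minus_carrier_mat)
  ultimately show ?thesis using minv_eqI unfolding X_def by blast
qed

lemma realization_change_of_basis:
  fixes R P :: "complex mat"
  assumes Re: "is_realization n G d A B C" and R: "R \<in> carrier_mat d d" and P: "P \<in> carrier_mat d d"
    and RP: "R * P = 1\<^sub>m d" and PR: "P * R = 1\<^sub>m d"
  shows "is_realization n G d (R * A * P) (R * B) (C * P)"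
proof -
  note A = realization_carrier(1)[OF Re] and B = realization_carrier(2)[OF Re]
    and C = realization_carrier(3)[OF Re]
  have G: "\<forall>\<^sub>F s in cofinite. G s = C * minv (s \<cdot>\<^sub>m 1\<^sub>m d - A) * B"
    using Re unfolding is_realization_def by blast
  note [simp] = A B C R P
  note assoc = assoc_mult_mat[of _ d d _ d _ d] assoc_mult_mat[of _ n d _ d _ d]
    assoc_mult_mat[of _ d d _ d _ n] assoc_mult_mat[of _ n d _ d _ n]
    mult_carrier_mat[of _ d d _ d] mult_carrier_mat[of _ n d _ d] mult_carrier_mat[of _ d d _ n]
  have PRY: "P * (R * Y) = Y" if "Y \<in> carrier_mat d d \<or> Y \<in> carrier_mat d n" for Y
    using that PR assoc_mult_mat[OF P R] by auto
  have "\<forall>\<^sub>F s in cofinite. G s = C * P * minv (s \<cdot>\<^sub>m 1\<^sub>m d - R * A * P) * (R * B)"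
    using G eventually_det_resolvent_nonzero[OF A]
  proof eventually_elim
    case (elim s)
    have "s \<cdot>\<^sub>m 1\<^sub>m d - A \<in> carrier_mat d d" by (intro minus_carrier_mat) auto
    from minv(1)[OF this elim(2)] show ?case
      using elim(1) PRY minv_resolvent_change_of_basis[OF A R P RP PR elim(2)] by (simp add: assoc)
  qed
  then show ?thesis unfolding is_realization_def by (simp add: assoc)
qed

lemma controllable_change_of_basis:
  fixes A B R P :: "complex mat"
  assumes A: "A \<in> carrier_mat d d" and B: "B \<in> carrier_mat d n" and co: "controllable A B"
    and R: "R \<in> carrier_mat d d" and P: "P \<in> carrier_mat d d" and RP: "R * P = 1\<^sub>m d" and PR: "P * R = 1\<^sub>m d"
  shows "controllable (R * A * P) (R * B)"
proof -
  have A': "R * A * P \<in> carrier_mat d d" and B': "R * B \<in> carrier_mat d n" using A B R P by auto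
  have "R * A = R * A * P * R"
    using A R P PR by (simp add: assoc_mult_mat[of _ d d _ d _ d])
  then have K: "R * ctrb_mat A B = ctrb_mat (R * A * P) (R * B)"
    using ctrb_mat_intertwine[OF R A A' B B'] by simp
  obtain X where X: "X \<in> carrier_mat (d * n) d" and KX: "ctrb_mat A B * X = 1\<^sub>m d"
    using co controllable_iff_right_invertible[OF A B] by blast
  have "ctrb_mat (R * A * P) (R * B) * (X * P) = R * (ctrb_mat A B * X) * P"
    unfolding K[symmetric] using R ctrb_mat_carrier[OF A B] X P
    by (simp add: assoc_mult_mat[of _ d d _ "d * n" _ d] assoc_mult_mat[of _ d "d * n" _ d _ d]
        assoc_mult_mat[of _ d d _ d _ d])
  also have "\<dots> = 1\<^sub>m d" using KX RP R by simp
  finally show ?thesis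
    using controllable_iff_right_invertible[OF A' B'] X P by (meson mult_carrier_mat)
qed

section \<open>Nonsingular complex symmetric matrices\<close>

lemma symmetric_form_commute:
  fixes T :: "'a::comm_semiring_0 mat"
  assumes T: "T \<in> carrier_mat d d" and sym: "transpose_mat T = T"
    and x: "x \<in> carrier_vec d" and y: "y \<in> carrier_vec d"
  shows "x \<bullet> (T *\<^sub>v y) = y \<bullet> (T *\<^sub>v x)"
  using transpose_vec_mult_scalar[OF T y x] comm_scalar_prod[of "T *\<^sub>v x" d y] sym T x y by simp

lemma symmetric_form_add_right:
  fixes T :: "'a::comm_semiring_0 mat"
  assumes T: "T \<in> carrier_mat d d" and x: "x \<in> carrier_vec d" and y: "y \<in> carrier_vec d"
    and z: "z \<in> carrier_vec d"
  shows "x \<bullet> (T *\<^sub>v (y + z)) = x \<bullet> (T *\<^sub>v y) + x \<bullet> (T *\<^sub>v z)"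
  using T x y z by (simp add: mult_add_distrib_mat_vec[OF T y z] scalar_prod_add_distrib[of _ d])

lemma symmetric_form_polarization:
  fixes T :: "'a::comm_ring_1 mat"
  assumes T: "T \<in> carrier_mat d d" and sym: "transpose_mat T = T"
    and x: "x \<in> carrier_vec d" and y: "y \<in> carrier_vec d"
  shows "(x + y) \<bullet> (T *\<^sub>v (x + y)) = x \<bullet> (T *\<^sub>v x) + 2 * (x \<bullet> (T *\<^sub>v y)) + y \<bullet> (T *\<^sub>v y)"
  using symmetric_form_add_right[OF T _ x y] add_scalar_prod_distrib[OF x y] x y T
    symmetric_form_commute[OF T sym y x] by (simp add: algebra_simps)

lemma symmetric_form_null_imp_kernel:
  fixes T :: "'a::comm_ring_1 mat"
  assumes T: "T \<in> carrier_mat d d" and sym: "transpose_mat T = T" and w: "w \<in> carrier_vec d"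
    and null: "\<And>z. z \<in> carrier_vec d \<Longrightarrow> w \<bullet> (T *\<^sub>v z) = 0"
  shows "T *\<^sub>v w = 0\<^sub>v d"
proof (rule eq_vecI)
  fix j assume "j < dim_vec (0\<^sub>v d)"
  then have j: "j < d" by simp
  have "(T *\<^sub>v w) $ j = w \<bullet> (T *\<^sub>v unit_vec d j)"
    using symmetric_form_commute[OF T sym w, of "unit_vec d j"] T w j
      comm_scalar_prod[of "T *\<^sub>v w" d "unit_vec d j"] by simp
  then show "(T *\<^sub>v w) $ j = 0\<^sub>v d $ j" using null[of "unit_vec d j"] j by simp
qed (use T in simp)

lemma orthonormal_complement_projection:
  fixes T P :: "'a::comm_ring_1 mat"
  assumes T: "T \<in> carrier_mat d d" and P: "P \<in> carrier_mat d k"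
    and orth: "transpose_mat P * T * P = 1\<^sub>m k" and z: "z \<in> carrier_vec d"
  shows "transpose_mat P *\<^sub>v (T *\<^sub>v (z - P *\<^sub>v (transpose_mat P *\<^sub>v (T *\<^sub>v z)))) = 0\<^sub>v k"
proof -
  define c where "c = transpose_mat P *\<^sub>v (T *\<^sub>v z)"
  have Pt: "transpose_mat P \<in> carrier_mat k d" using P by simp
  have c: "c \<in> carrier_vec k" and Pc: "P *\<^sub>v c \<in> carrier_vec d" unfolding c_def using Pt P T z by auto
  have "transpose_mat P *\<^sub>v (T *\<^sub>v (P *\<^sub>v c)) = (transpose_mat P * T * P) *\<^sub>v c"
    using assoc_mult_mat_vec[OF T P c] assoc_mult_mat_vec[OF Pt mult_carrier_mat[OF T P] c]
      assoc_mult_mat[OF Pt T P] by simp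
  then have PTPc: "transpose_mat P *\<^sub>v (T *\<^sub>v (P *\<^sub>v c)) = c" using orth c by simp
  have "transpose_mat P *\<^sub>v (T *\<^sub>v (z - P *\<^sub>v c))
      = transpose_mat P *\<^sub>v (T *\<^sub>v z) - transpose_mat P *\<^sub>v (T *\<^sub>v (P *\<^sub>v c))"
    using mult_minus_distrib_mat_vec[OF T z Pc] mult_minus_distrib_mat_vec[OF Pt] T z Pc by simp
  also have "\<dots> = 0\<^sub>v k" unfolding PTPc c_def[symmetric] using c by simp
  finally show ?thesis unfolding c_def .
qed

(* If every vector of the T-orthogonal complement W of the columns of P were isotropic, W would be
   totally isotropic by polarization. Since W and the columns of P span everything, a nonzero w in W,
   which exists because k < d, would then lie in the kernel of T. *)
lemma exists_anisotropic_vector_orthogonal: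
  fixes T P :: "complex mat"
  assumes T: "T \<in> carrier_mat d d" and sym: "transpose_mat T = T" and det: "det T \<noteq> 0"
    and P: "P \<in> carrier_mat d k" and kd: "k < d" and orth: "transpose_mat P * T * P = 1\<^sub>m k"
  obtains x where "x \<in> carrier_vec d" "transpose_mat P *\<^sub>v (T *\<^sub>v x) = 0\<^sub>v k" "x \<bullet> (T *\<^sub>v x) \<noteq> 0"
proof (rule ccontr)
  assume "\<not> thesis"
  define W where "W = {x \<in> carrier_vec d. transpose_mat P *\<^sub>v (T *\<^sub>v x) = 0\<^sub>v k}"
  from \<open>\<not> thesis\<close> that have isotropic: "x \<bullet> (T *\<^sub>v x) = 0" if "x \<in> W" for x
    using that unfolding W_def by blast
  have Pt: "transpose_mat P \<in> carrier_mat k d" using P by simp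
  have W_orth: "x \<bullet> (T *\<^sub>v y) = 0" if x: "x \<in> W" and y: "y \<in> W" for x y
  proof -
    have "x + y \<in> W"
      using x y Pt T unfolding W_def
      by (auto simp: mult_add_distrib_mat_vec[OF T] mult_add_distrib_mat_vec[OF Pt])
    then show ?thesis
      using symmetric_form_polarization[OF T sym, of x y] isotropic x y unfolding W_def by auto
  qed
  obtain w where w: "w \<in> carrier_vec d" "w \<noteq> 0\<^sub>v d" and "(transpose_mat P * T) *\<^sub>v w = 0\<^sub>v k"
    using wide_mat_kernel_nonzero[OF mult_carrier_mat[OF Pt T] kd] .
  then have wW: "w \<in> W" unfolding W_def using assoc_mult_mat_vec[OF Pt T] by simp
  have "w \<bullet> (T *\<^sub>v z) = 0" if z: "z \<in> carrier_vec d" for z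
  proof -
    define c where "c = transpose_mat P *\<^sub>v (T *\<^sub>v z)"
    have c: "c \<in> carrier_vec k" and Pc: "P *\<^sub>v c \<in> carrier_vec d" unfolding c_def using Pt P T z by auto
    have "z - P *\<^sub>v c \<in> W"
      using orthonormal_complement_projection[OF T P orth z] z Pc unfolding W_def c_def by simp
    then have "w \<bullet> (T *\<^sub>v (z - P *\<^sub>v c)) = 0" using W_orth[OF wW] by blast
    moreover have "w \<bullet> (T *\<^sub>v (P *\<^sub>v c)) = c \<bullet> (transpose_mat P *\<^sub>v (T *\<^sub>v w))"
      using symmetric_form_commute[OF T sym w(1) Pc] transpose_vec_mult_scalar[OF P c, of "T *\<^sub>v w"]
        comm_scalar_prod[of "P *\<^sub>v c" d "T *\<^sub>v w"] comm_scalar_prod[of c k] Pc c T w(1) Pt by simp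
    moreover have "z - P *\<^sub>v c + P *\<^sub>v c = z" using z P c by (intro eq_vecI) auto
    ultimately show ?thesis
      using symmetric_form_add_right[OF T w(1) _ Pc, of "z - P *\<^sub>v c"] wW z Pc c unfolding W_def
      by simp
  qed
  then have "T *\<^sub>v w = 0\<^sub>v d" using symmetric_form_null_imp_kernel[OF T sym w(1)] by blast
  then show False using det_0_iff_vec_prod_zero[OF T] det w by blast
qed

lemma unit_vector_orthogonal_exists:
  fixes T P :: "complex mat"
  assumes T: "T \<in> carrier_mat d d" and sym: "transpose_mat T = T" and det: "det T \<noteq> 0"
    and P: "P \<in> carrier_mat d k" and kd: "k < d" and orth: "transpose_mat P * T * P = 1\<^sub>m k"
  obtains p where "p \<in> carrier_vec d" "transpose_mat P *\<^sub>v (T *\<^sub>v p) = 0\<^sub>v k" "p \<bullet> (T *\<^sub>v p) = 1"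
proof -
  obtain x where x: "x \<in> carrier_vec d" and Px: "transpose_mat P *\<^sub>v (T *\<^sub>v x) = 0\<^sub>v k"
    and xx: "x \<bullet> (T *\<^sub>v x) \<noteq> 0"
    using exists_anisotropic_vector_orthogonal[OF T sym det P kd orth] .
  define c where "c = 1 / csqrt (x \<bullet> (T *\<^sub>v x))"
  have "c \<cdot>\<^sub>v x \<in> carrier_vec d" using x by simp
  moreover have "transpose_mat P *\<^sub>v (T *\<^sub>v (c \<cdot>\<^sub>v x)) = 0\<^sub>v k"
    using Px T P x by (auto simp: mult_mat_vec[OF T x] mult_mat_vec[of _ k d])
  moreover have "(c \<cdot>\<^sub>v x) \<bullet> (T *\<^sub>v (c \<cdot>\<^sub>v x)) = c * c * (x \<bullet> (T *\<^sub>v x))"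
    using x T by (simp add: mult_mat_vec[OF T x])
  then have "(c \<cdot>\<^sub>v x) \<bullet> (T *\<^sub>v (c \<cdot>\<^sub>v x)) = 1"
    using xx unfolding c_def by (simp add: power2_eq_square[symmetric] power_divide)
  ultimately show thesis using that by blast
qed

lemma orthonormal_columns_snoc:
  fixes T P :: "'a::comm_ring_1 mat"
  assumes T: "T \<in> carrier_mat d d" and sym: "transpose_mat T = T"
    and P: "P \<in> carrier_mat d k" and orth: "transpose_mat P * T * P = 1\<^sub>m k"
    and p: "p \<in> carrier_vec d" and Pp: "transpose_mat P *\<^sub>v (T *\<^sub>v p) = 0\<^sub>v k"
    and pp: "p \<bullet> (T *\<^sub>v p) = 1"
  shows "transpose_mat (mat_of_cols d (cols P @ [p])) * T * mat_of_cols d (cols P @ [p]) = 1\<^sub>m (Suc k)"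
    (is "transpose_mat ?P' * T * ?P' = _")
proof (rule eq_matI)
  have P': "?P' \<in> carrier_mat d (Suc k)" using mat_of_cols_carrier(1)[of d "cols P @ [p]"] P by simp
  fix i j assume "i < dim_row (1\<^sub>m (Suc k))" "j < dim_col (1\<^sub>m (Suc k))"
  then have i: "i < Suc k" and j: "j < Suc k" by auto
  note col_P' = col_mat_of_cols_snoc[OF P p]
  have colP_p: "col P b \<bullet> (T *\<^sub>v p) = 0" if "b < k" for b
  proof -
    have "col P b \<bullet> (T *\<^sub>v p) = (transpose_mat P *\<^sub>v (T *\<^sub>v p)) $ b" using that P by simp
    then show ?thesis using Pp that by simp
  qed
  have "col ?P' i \<bullet> (T *\<^sub>v col ?P' j) = 1\<^sub>m (Suc k) $$ (i, j)"
  proof (cases "i < k"; cases "j < k")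
    assume "i < k" "j < k"
    then show ?thesis
      using index_transpose_mult_mult[OF T P, of i j] col_P'[OF i] col_P'[OF j] orth by simp
  next
    assume "i < k" "\<not> j < k"
    then show ?thesis using col_P'[OF i] col_P'[OF j] j colP_p by simp
  next
    assume "\<not> i < k" "j < k"
    then show ?thesis
      using col_P'[OF i] col_P'[OF j] i colP_p symmetric_form_commute[OF T sym p, of "col P j"] P by simp
  next
    assume "\<not> i < k" "\<not> j < k"
    then show ?thesis using col_P'[OF i] col_P'[OF j] i j pp by simp
  qed
  then show "(transpose_mat ?P' * T * ?P') $$ (i, j) = 1\<^sub>m (Suc k) $$ (i, j)"
    using index_transpose_mult_mult[OF T P' i j] by simp
qed (use P T in auto)

lemma orthonormal_columns_exist:
  fixes T :: "complex mat"
  assumes T: "T \<in> carrier_mat d d" and sym: "transpose_mat T = T" and det: "det T \<noteq> 0"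
  shows "k \<le> d \<Longrightarrow> \<exists>P \<in> carrier_mat d k. transpose_mat P * T * P = 1\<^sub>m k"
proof (induction k)
  case 0
  have "transpose_mat (0\<^sub>m d 0) * T * 0\<^sub>m d 0 = (1\<^sub>m 0 :: complex mat)"
    using T by (intro eq_matI) auto
  then show ?case by (intro bexI[of _ "0\<^sub>m d 0"]) auto
next
  case (Suc k)
  then obtain P where P: "P \<in> carrier_mat d k" and orth: "transpose_mat P * T * P = 1\<^sub>m k" by auto
  have "k < d" using Suc(2) by simp
  then obtain p where p: "p \<in> carrier_vec d" "transpose_mat P *\<^sub>v (T *\<^sub>v p) = 0\<^sub>v k" "p \<bullet> (T *\<^sub>v p) = 1"
    using unit_vector_orthogonal_exists[OF T sym det P _ orth] by blast
  have "mat_of_cols d (cols P @ [p]) \<in> carrier_mat d (Suc k)"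
    using mat_of_cols_carrier(1)[of d "cols P @ [p]"] P by simp
  with orthonormal_columns_snoc[OF T sym P orth p] show ?case by blast
qed

lemma symmetric_nonsingular_factor:
  fixes T :: "complex mat"
  assumes T: "T \<in> carrier_mat d d" and sym: "transpose_mat T = T" and det: "det T \<noteq> 0"
  obtains R P where "R \<in> carrier_mat d d" "P \<in> carrier_mat d d" "R * P = 1\<^sub>m d" "P * R = 1\<^sub>m d"
    "transpose_mat R * R = T"
proof -
  obtain P where P: "P \<in> carrier_mat d d" and orth: "transpose_mat P * T * P = 1\<^sub>m d"
    using orthonormal_columns_exist[OF T sym det, of d] by auto
  define R where "R = transpose_mat P * T"
  have R: "R \<in> carrier_mat d d" unfolding R_def using P T by simp
  have RP: "R * P = 1\<^sub>m d" unfolding R_def using orth .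
  have PR: "P * R = 1\<^sub>m d" using mat_mult_left_right_inverse[OF R P RP] .
  have "transpose_mat R * R = T * (P * R)"
    unfolding R_def using transpose_mult[OF transpose_carrier_mat[THEN iffD2, OF P] T] sym
      assoc_mult_mat[OF T P R] R_def by simp
  with PR T have "transpose_mat R * R = T" by simp
  with R P RP PR that show thesis by blast
qed

section \<open>Symmetric realizations\<close>

lemma symmetrize_by_factor:
  fixes A B C R P :: "'a::comm_semiring_1 mat"
  assumes A: "A \<in> carrier_mat d d" and B: "B \<in> carrier_mat d n" and C: "C \<in> carrier_mat n d"
    and R: "R \<in> carrier_mat d d" and P: "P \<in> carrier_mat d d" and RP: "R * P = 1\<^sub>m d"
    and TA: "transpose_mat R * R * A = transpose_mat A * (transpose_mat R * R)"
    and TB: "transpose_mat R * R * B = transpose_mat C"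
  shows "transpose_mat (R * A * P) = R * A * P" and "transpose_mat (R * B) = C * P"
proof -
  have Rt: "transpose_mat R \<in> carrier_mat d d" and Pt: "transpose_mat P \<in> carrier_mat d d"
    and At: "transpose_mat A \<in> carrier_mat d d" using R P A by auto
  note [simp] = A B C R P Rt Pt At
  note assoc = assoc_mult_mat[of _ d d _ d _ d] assoc_mult_mat[of _ n d _ d _ d]
    assoc_mult_mat[of _ d d _ d _ n] mult_carrier_mat[of _ d d _ d] mult_carrier_mat[of _ n d _ d]
    mult_carrier_mat[of _ d d _ n] right_mult_one_mat[of _ d d] right_mult_one_mat[of _ n d]
    left_mult_one_mat[of _ d d] left_mult_one_mat[of _ d n]
  have PtRt: "transpose_mat P * transpose_mat R = 1\<^sub>m d" using transpose_mult[OF R P] RP by simp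
  have "transpose_mat (R * A * P) = transpose_mat P * (transpose_mat A * (transpose_mat R * R)) * P"
    using RP transpose_mult[OF mult_carrier_mat[OF R A] P] transpose_mult[OF R A] by (simp add: assoc)
  also have "\<dots> = transpose_mat P * (transpose_mat R * R * A) * P" by (simp only: TA)
  also have "\<dots> = (transpose_mat P * transpose_mat R) * (R * A * P)" by (simp add: assoc)
  finally show "transpose_mat (R * A * P) = R * A * P" using PtRt by (simp add: assoc)
  have "transpose_mat (R * B) * R * P = C * P"
    using arg_cong[OF TB, of transpose_mat] transpose_mult[OF mult_carrier_mat[OF Rt R] B]
      transpose_mult[OF Rt R] transpose_mult[OF R B] by (simp add: assoc)
  then show "transpose_mat (R * B) = C * P" using RP by (simp add: assoc)
qed

lemma symmetric_minimal_realization_exists: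
  assumes Re: "is_realization n G d A B C" and co: "controllable A B" and ob: "observable A C"
    and sym: "\<forall>\<^sub>F s in cofinite. G s = transpose_mat (G s)"
  shows "\<exists>A' B' C'. A' = transpose_mat A' \<and> C' = transpose_mat B' \<and>
    is_realization n G d A' B' C' \<and> controllable A' B' \<and> observable A' C'"
proof -
  note A = realization_carrier(1)[OF Re] and B = realization_carrier(2)[OF Re]
    and C = realization_carrier(3)[OF Re]
  have At: "transpose_mat A \<in> carrier_mat d d" and Bt: "transpose_mat B \<in> carrier_mat n d"
    and Ct: "transpose_mat C \<in> carrier_mat d n" using A B C by auto
  have Ret: "is_realization n G d (transpose_mat A) (transpose_mat C) (transpose_mat B)"
    using realization_transpose[OF Re sym] .
  obtain T U where T: "T \<in> carrier_mat d d" and U: "U \<in> carrier_mat d d"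
    and TU: "T * U = 1\<^sub>m d" and "U * T = 1\<^sub>m d"
    and TA: "T * A = transpose_mat A * T" and TB: "T * B = transpose_mat C" and BT: "transpose_mat B * T = C"
    using markov_eq_imp_similar[OF A B C At Ct Bt realization_markov_eq[OF Re Ret]]
      controllable_transpose_iff[OF A C] observable_transpose_iff[OF A B] co ob by metis
  have "transpose_mat T * A = transpose_mat A * transpose_mat T"
    using arg_cong[OF TA, of transpose_mat] transpose_mult[OF T A] transpose_mult[OF At T] by simp
  moreover have "transpose_mat T * B = transpose_mat C"
    using arg_cong[OF BT, of transpose_mat] transpose_mult[OF Bt T] by simp
  ultimately have T_sym: "transpose_mat T = T"
    using intertwiner_unique[OF A At B Ct co] T TA TB by simp
  have "det T \<noteq> 0" using det_mult[OF T U] TU by auto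
  then obtain R P where R: "R \<in> carrier_mat d d" and P: "P \<in> carrier_mat d d"
    and RP: "R * P = 1\<^sub>m d" and PR: "P * R = 1\<^sub>m d" and RR: "transpose_mat R * R = T"
    using symmetric_nonsingular_factor[OF T T_sym] by blast
  have sym': "transpose_mat (R * A * P) = R * A * P" "transpose_mat (R * B) = C * P"
    using symmetrize_by_factor[OF A B C R P RP] TA TB unfolding RR by auto
  have co': "controllable (R * A * P) (R * B)"
    using controllable_change_of_basis[OF A B co R P RP PR] .
  have "observable (R * A * P) (C * P)"
    using observable_transpose_iff[of "R * A * P" d "R * B" n] co' sym' A B R P by simp
  with sym' co' realization_change_of_basis[OF Re R P RP PR] show ?thesis by metis
qed

lemma orth_group_minv:
  assumes "S \<in> orth_group d"
  shows "S \<in> carrier_mat d d" "minv S = transpose_mat S" "transpose_mat S * S = 1\<^sub>m d"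
proof -
  show S: "S \<in> carrier_mat d d" using assms unfolding orth_group_def by auto
  have St: "transpose_mat S \<in> carrier_mat d d" using S by simp
  have "S * transpose_mat S = 1\<^sub>m d" using assms unfolding orth_group_def by auto
  from minv_eqI[OF S St this] mat_mult_left_right_inverse[OF S St this]
  show "minv S = transpose_mat S" "transpose_mat S * S = 1\<^sub>m d" by auto
qed

lemma symmetric_minimal_realization_unique:
  assumes R1: "is_realization n G d A1 B1 C1" and co1: "controllable A1 B1"
    and sA1: "A1 = transpose_mat A1" and sC1: "C1 = transpose_mat B1"
    and R2: "is_realization n G d A2 B2 C2" and co2: "controllable A2 B2" and ob2: "observable A2 C2"
    and sA2: "A2 = transpose_mat A2" and sC2: "C2 = transpose_mat B2"
  shows "\<exists>!S. S \<in> orth_group d \<and> A2 = S * A1 * minv S \<and> B2 = S * B1 \<and> C2 = C1 * minv S"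
proof -
  note A1 = realization_carrier(1)[OF R1] and B1 = realization_carrier(2)[OF R1]
    and C1 = realization_carrier(3)[OF R1]
  note A2 = realization_carrier(1)[OF R2] and B2 = realization_carrier(2)[OF R2]
    and C2 = realization_carrier(3)[OF R2]
  obtain T U where T: "T \<in> carrier_mat d d" and U: "U \<in> carrier_mat d d"
    and TU: "T * U = 1\<^sub>m d" and UT: "U * T = 1\<^sub>m d"
    and TA: "T * A1 = A2 * T" and TB: "T * B1 = B2" and CT: "C2 * T = C1"
    using markov_eq_imp_similar[OF A1 B1 C1 A2 B2 C2 realization_markov_eq[OF R1 R2] co2 ob2] .
  have "transpose_mat T * A2 = A1 * transpose_mat T"
    using arg_cong[OF TA, of transpose_mat] transpose_mult[OF T A1] transpose_mult[OF A2 T] sA1 sA2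
    by simp
  moreover have "transpose_mat T * B2 = B1"
    using arg_cong[OF CT, of transpose_mat] transpose_mult[OF C2 T] sC1 sC2 by simp
  ultimately have "transpose_mat T = U"
    using intertwiner_unique[OF A2 A1 B2 B1 co2 _ _ _ U intertwiner_inverse[OF T U A1 A2 B1 TU UT TA TB]]
      T by simp
  then have T_orth: "T \<in> orth_group d" unfolding orth_group_def using T TU by simp
  show ?thesis
  proof (rule ex1I[of _ T])
    have "C2 = C1 * U" using CT UT C2 assoc_mult_mat[OF C2 T U] TU by simp
    then show "T \<in> orth_group d \<and> A2 = T * A1 * minv T \<and> B2 = T * B1 \<and> C2 = C1 * minv T"
      using T_orth TB minv_eqI[OF T U TU] conjugate_eq_iff_intertwines[OF T U A1 A2 TU UT] TA by simp
  next
    fix S assume S: "S \<in> orth_group d \<and> A2 = S * A1 * minv S \<and> B2 = S * B1 \<and> C2 = C1 * minv S"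
    note Sorth = orth_group_minv[of S d]
    have "S * A1 = A2 * S"
      using S Sorth conjugate_eq_iff_intertwines[of S d "transpose_mat S" A1 A2] A1 A2 orth_group_def
      by auto
    then show "S = T" using intertwiner_unique[OF A1 A2 B1 B2 co1 _ _ _ T TA TB] S Sorth by blast
  qed
qed

theorem mainTheorem1:
  fixes n \<delta> :: nat and G :: "complex \<Rightarrow> complex mat"
  assumes "strictly_proper_rational n G"
    and "mcmillan_degree n G \<delta>"
    and "\<forall>\<^sub>F s in cofinite. G s = transpose_mat (G s)"
  shows "(\<exists>A B C. A = transpose_mat A \<and> C = transpose_mat B \<and>
            is_realization n G \<delta> A B C \<and> controllable A B \<and> observable A C)
       \<and> (\<forall>A1 B1 C1 A2 B2 C2.
            is_realization n G \<delta> A1 B1 C1 \<and> controllable A1 B1 \<and> observable A1 C1 \<and>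
            A1 = transpose_mat A1 \<and> C1 = transpose_mat B1 \<and>
            is_realization n G \<delta> A2 B2 C2 \<and> controllable A2 B2 \<and> observable A2 C2 \<and>
            A2 = transpose_mat A2 \<and> C2 = transpose_mat B2
            \<longrightarrow> (\<exists>!S. S \<in> orth_group \<delta> \<and>
                   A2 = S * A1 * minv S \<and> B2 = S * B1 \<and> C2 = C1 * minv S))"
proof -
  from assms(2) obtain A B C
    where "is_realization n G \<delta> A B C" "controllable A B" "observable A C"
    unfolding mcmillan_degree_def by blast
  from symmetric_minimal_realization_exists[OF this assms(3)]
  show ?thesis using symmetric_minimal_realization_unique by blast
qed

end
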